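(* Let $n\in\mathbb{N}$, let $r$ be a prime, $j$ an integer coprime to $r$, and $V$ real with $1\leqslant V<r$. Let $\tilde{\mathcal{V}}$ be any subset of $\mathcal{V}:=(V/2,V]\cap\mathbb{N}$. Then for every $\xi\in\mathbb{R}$, $$\sum_{(\lambda,\mu)\in\mathbb{F}_r^2}\left|\sum_{v\in\tilde{\mathcal{V}}}e_r\!\left(\lambda\sqrt{j(\mu-v)}\right)e(\xi v)\right|^{2n}\ll_n\left(V^{2n}+rV^{n}\right)r.$$
   Context: Notation: $e(x)=e^{2\pi i x}$, $e_r(x)=e(x/r)$. Modular square-root convention: for a prime $r$, an $r$-periodic $g$ and any $h$, $\sum_{s\in\mathcal{S}}g(\sqrt{s})h(s)$ means $\sum_{s\in\mathcal{S}}\sum_{k\bmod r,\ k^2\equiv s\bmod r}g(k)h(s)$, i.e. the sum runs over all modular square roots of $s$ modulo $r$ (a term with no square root contributes nothing). Thus the inner sum is $\sum_{v\in\tilde{\mathcal V}}\sum_{k\bmod r,\ k^2\equiv j(\mu-v)}e_r(\lambda k)e(\xi v)$. The implied constant depends only on $n$. *)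

theory Defs
  imports "HOL-Number_Theory.Number_Theory" "HOL-Analysis.Analysis"
begin

definition ee :: "real \<Rightarrow> complex" where
  "ee x = exp (2 * of_real pi * \<i> * of_real x)"

definition ee_r :: "nat \<Rightarrow> real \<Rightarrow> complex" where
  "ee_r r x = ee (x / real r)"

definition inner_sum :: "nat \<Rightarrow> int \<Rightarrow> nat set \<Rightarrow> real \<Rightarrow> int \<Rightarrow> int \<Rightarrow> complex" where
  "inner_sum r j Vt \<xi> a b =
     (\<Sum>v\<in>Vt. \<Sum>k\<in>{k\<in>{0..<int r}. [k^2 = j * (b - int v)] (mod int r)}.
        ee_r r (real_of_int (a * k)) * ee (\<xi> * real v))"

end

theory Submission
  imports Defs "HOL-Computational_Algebra.Computational_Algebra"
begin

text \<open>Expanding the 2n-th power and summing over \<lambda> by orthogonality bounds the left-hand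
  side by r times the number of pairs (\<mu>, tuple) with k_1 + ... + k_n = k_(n+1) + ... + k_2n
  (mod r), where each k_i is a square root of j (\<mu> - v_i). Write k_i = \<plusminus>\<rho>(v_i) for a fixed
  root \<rho>(v) and group equal shifts v: each choice of shifts and signs yields a relation
  \<Sum>_y e_y \<surd>(j (\<mu> - y)) = 0 with integer coefficients |e_y| \<le> 2n.

  If all e_y vanish, every shift occurs at least twice, so there are O_n(V^n) such choices,
  each allowing all r values of \<mu>; this gives the term r V^n. Otherwise the square roots of
  the distinct linear forms j (x - y) are independent modulo r: they generate a tower of
  quadratic extensions of F_r[x] in which no new radicand is a square. Taking norms down the
  tower turns the relation into a nonzero polynomial in \<mu> of degree bounded in terms of n,
  so only O_n(1) values of \<mu> occur; this gives the term V^2n.\<close>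

section \<open>Integer polynomials modulo a prime\<close>

definition ipoly :: "int poly \<Rightarrow> 'a::comm_ring_1 \<Rightarrow> 'a" where
  "ipoly p x = poly (map_poly of_int p) x"

lemma ipoly_0 [simp]: "ipoly 0 x = 0"
  by (simp add: ipoly_def)

lemma ipoly_pCons [simp]: "ipoly (pCons a p) x = of_int a + x * ipoly p x"
  by (simp add: ipoly_def map_poly_pCons)

lemma ipoly_add [simp]: "ipoly (p + q) x = ipoly p x + ipoly q x"
proof -
  have "map_poly (of_int :: int \<Rightarrow> 'a) (p + q) = map_poly of_int p + map_poly of_int q"
    by (rule poly_eqI) (simp add: coeff_map_poly)
  then show ?thesis by (simp add: ipoly_def)
qed

lemma ipoly_smult [simp]: "ipoly (smult c p) x = of_int c * ipoly p x"
proof -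
  have "map_poly (of_int :: int \<Rightarrow> 'a) (smult c p) = smult (of_int c) (map_poly of_int p)"
    by (rule poly_eqI) (simp add: coeff_map_poly)
  then show ?thesis by (simp add: ipoly_def)
qed

lemma ipoly_mult [simp]: "ipoly (p * q) x = ipoly p x * ipoly q x"
  by (induction p) (simp_all add: algebra_simps)

lemma ipoly_uminus [simp]: "ipoly (- p) x = - ipoly p x"
  using ipoly_add[of p "- p" x] by (simp add: add_eq_0_iff2)

lemma ipoly_int [simp]: "ipoly p (x :: int) = poly p x"
  by (simp add: ipoly_def)

lemma finite_ipoly_roots:
  assumes "p \<noteq> 0"
  shows "finite {x :: complex. ipoly p x = 0}"
proof -
  have "map_poly (of_int :: int \<Rightarrow> complex) p \<noteq> 0"
    using assms by (subst map_poly_eq_0_iff) (auto simp: coeff_map_poly)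
  then show ?thesis
    unfolding ipoly_def by (rule poly_roots_finite)
qed

definition poly_zero_mod :: "int \<Rightarrow> int poly \<Rightarrow> bool" where
  "poly_zero_mod r p \<longleftrightarrow> (\<forall>i. r dvd coeff p i)"

lemma poly_zero_mod_0 [simp]: "poly_zero_mod r 0"
  by (simp add: poly_zero_mod_def)

lemma poly_zero_mod_const [simp]: "poly_zero_mod r [:c:] \<longleftrightarrow> r dvd c"
  by (auto simp: poly_zero_mod_def coeff_pCons split: nat.splits)

lemma poly_zero_mod_uminus [simp]: "poly_zero_mod r (- p) \<longleftrightarrow> poly_zero_mod r p"
  by (simp add: poly_zero_mod_def)

lemma poly_zero_mod_add: "poly_zero_mod r p \<Longrightarrow> poly_zero_mod r q \<Longrightarrow> poly_zero_mod r (p + q)"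
  by (simp add: poly_zero_mod_def)

lemma poly_zero_mod_diff: "poly_zero_mod r p \<Longrightarrow> poly_zero_mod r q \<Longrightarrow> poly_zero_mod r (p - q)"
  by (simp add: poly_zero_mod_def)

lemma poly_zero_mod_mult_left: "poly_zero_mod r p \<Longrightarrow> poly_zero_mod r (p * q)"
  unfolding poly_zero_mod_def coeff_mult by (intro allI dvd_sum) (simp add: dvd_mult2)

lemma poly_zero_mod_mult_right: "poly_zero_mod r q \<Longrightarrow> poly_zero_mod r (p * q)"
  using poly_zero_mod_mult_left[of r q p] by (simp add: mult.commute)

lemma poly_zero_mod_imp_dvd_poly: "poly_zero_mod r p \<Longrightarrow> r dvd poly p x"
  by (simp add: poly_zero_mod_def poly_altdef dvd_sum)

lemma poly_zero_mod_iff_dvd_content: "poly_zero_mod r p \<longleftrightarrow> r dvd content p"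
proof
  assume zero: "poly_zero_mod r p"
  have "p = [:r:] * map_poly (\<lambda>c. c div r) p"
    using zero by (intro poly_eqI) (simp add: coeff_map_poly poly_zero_mod_def)
  then have "[:r:] dvd p"
    by (metis dvd_triv_left)
  then show "r dvd content p"
    by (simp add: const_poly_dvd_iff_dvd_content)
next
  assume "r dvd content p"
  then show "poly_zero_mod r p"
    unfolding poly_zero_mod_def using content_dvd_coeff dvd_trans by blast
qed

lemma poly_zero_mod_mult_prime:
  "prime r \<Longrightarrow> poly_zero_mod r (p * q) \<Longrightarrow> poly_zero_mod r p \<or> poly_zero_mod r q"
  by (simp add: poly_zero_mod_iff_dvd_content content_mult prime_dvd_mult_iff)

lemma poly_zero_mod_double:
  fixes r :: int
  assumes "prime r" "r > 2" "poly_zero_mod r (p + p)"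
  shows "poly_zero_mod r p"
  unfolding poly_zero_mod_def
proof
  fix i
  have "r dvd 2 * coeff p i"
    using assms(3) unfolding poly_zero_mod_def coeff_add by (simp only: mult_2)
  moreover have "\<not> r dvd 2"
    using assms(2) zdvd_imp_le[of r 2] by linarith
  ultimately show "r dvd coeff p i"
    using assms(1) by (simp add: prime_dvd_mult_iff)
qed

lemma not_poly_zero_mod_monic_linear:
  assumes "\<not> is_unit r"
  shows "\<not> poly_zero_mod r [:a, 1:]"
proof
  assume "poly_zero_mod r [:a, 1:]"
  then have "r dvd coeff [:a, 1:] 1"
    unfolding poly_zero_mod_def by blast
  with assms show False
    by simp
qed

lemma poly_zero_mod_linear_factor:
  assumes "prime r" "poly_zero_mod r ([:-y, 1:] * q)"
  shows "poly_zero_mod r q"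
proof -
  have "\<not> poly_zero_mod r [:-y, 1:]"
    using assms(1) not_prime_unit not_poly_zero_mod_monic_linear by blast
  then show ?thesis
    using poly_zero_mod_mult_prime[OF assms] by blast
qed

lemma card_roots_mod_prime:
  fixes r :: int
  assumes "prime r" "\<not> poly_zero_mod r p"
  shows "card {x \<in> {0..<r}. r dvd poly p x} \<le> degree p"
  using assms(2)
proof (induction "degree p" arbitrary: p rule: less_induct)
  case less
  show ?case
  proof (cases "{x \<in> {0..<r}. r dvd poly p x} = {}")
    case True
    then show ?thesis
      by (simp only: card.empty)
  next
    case False
    then obtain x0 where x0: "x0 \<in> {0..<r}" "r dvd poly p x0"
      by auto
    define q where "q = synthetic_div p x0"
    define c where "c = poly p x0"
    have p_eq: "p = [:-x0, 1:] * q + [:c:]"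
      using synthetic_div_correct'[of x0 p] by (simp add: q_def c_def)
    have "r dvd c"
      using x0(2) by (simp add: c_def)
    have q_nonzero: "\<not> poly_zero_mod r q"
    proof
      assume "poly_zero_mod r q"
      then have "poly_zero_mod r p"
        unfolding p_eq using \<open>r dvd c\<close> by (intro poly_zero_mod_add poly_zero_mod_mult_right) simp_all
      then show False
        using less.prems by simp
    qed
    have "degree p \<noteq> 0"
    proof
      assume "degree p = 0"
      then have "p = [:c:]"
        unfolding c_def by (metis degree_0_id poly_const_conv)
      then show False
        using less.prems \<open>r dvd c\<close> by simp
    qed
    then have deg_q: "degree q < degree p"
      by (simp add: q_def degree_synthetic_div)
    have "{x \<in> {0..<r}. r dvd poly p x} \<subseteq> insert x0 {x \<in> {0..<r}. r dvd poly q x}"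
    proof
      fix x assume x: "x \<in> {x \<in> {0..<r}. r dvd poly p x}"
      show "x \<in> insert x0 {x \<in> {0..<r}. r dvd poly q x}"
      proof (cases "x = x0")
        case False
        have "(x - x0) * poly q x = poly p x - c"
          by (simp add: p_eq algebra_simps)
        then have "r dvd (x - x0) * poly q x"
          using x \<open>r dvd c\<close> by (simp add: dvd_diff)
        moreover have "\<not> r dvd x - x0"
        proof
          assume "r dvd x - x0"
          then have "x mod r = x0 mod r"
            by (simp add: mod_eq_dvd_iff)
          then show False
            using x x0(1) False by simp
        qed
        ultimately show ?thesis
          using assms(1) x by (simp add: prime_dvd_mult_iff)
      qed simp
    qed
    then have "card {x \<in> {0..<r}. r dvd poly p x} \<le> card (insert x0 {x \<in> {0..<r}. r dvd poly q x})"
      by (intro card_mono) (auto intro: finite_subset[of _ "{0..<r}"])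
    also have "\<dots> \<le> Suc (card {x \<in> {0..<r}. r dvd poly q x})"
      by (simp add: card_insert_le_m1)
    also have "\<dots> \<le> degree p"
      using less.hyps[OF deg_q q_nonzero] deg_q by simp
    finally show ?thesis .
  qed
qed

text \<open>Descent on the degree of B: y is forced to be a root of A and then of B, and dividing
  both by x - y gives a smaller solution.\<close>
lemma poly_zero_mod_square_linear_factor:
  fixes r y :: int
  assumes "prime r" "\<not> r dvd poly h y"
    and "poly_zero_mod r (A * A - [:-y, 1:] * h * (B * B))"
  shows "poly_zero_mod r B"
  using assms(3)
proof (induction "degree B" arbitrary: A B rule: less_induct)
  case less
  define L where "L = [:-y, 1:]"
  have L_factor: "poly_zero_mod r (L * q) \<Longrightarrow> poly_zero_mod r q" for q
    unfolding L_def by (rule poly_zero_mod_linear_factor[OF assms(1)])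
  have zero: "poly_zero_mod r (A * A - L * h * (B * B))"
    unfolding L_def by (rule less.prems)
  have "r dvd poly A y * poly A y"
    using poly_zero_mod_imp_dvd_poly[OF less.prems, of y] by simp
  then have "r dvd poly A y"
    using assms(1) by (simp add: prime_dvd_mult_iff)
  define A' where "A' = synthetic_div A y"
  define a where "a = [:poly A y:]"
  have A_eq: "A = L * A' + a"
    using synthetic_div_correct'[of y A] by (simp add: A'_def a_def L_def)
  have a_zero: "poly_zero_mod r a"
    using \<open>r dvd poly A y\<close> by (simp add: a_def)
  define Q where "Q = L * A' * A' - h * B * B"
  have "L * Q = (A * A - L * h * (B * B)) - a * (2 * L * A' + a)"
    unfolding Q_def A_eq by (simp add: algebra_simps)
  also have "poly_zero_mod r \<dots>"
    by (rule poly_zero_mod_diff[OF zero poly_zero_mod_mult_left[OF a_zero]])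
  finally have Q_zero: "poly_zero_mod r Q"
    by (rule L_factor)
  have "r dvd poly h y * (poly B y * poly B y)"
    using poly_zero_mod_imp_dvd_poly[OF Q_zero, of y] by (simp add: Q_def L_def mult.assoc)
  then have "r dvd poly B y"
    using assms by (simp add: prime_dvd_mult_iff)
  define B' where "B' = synthetic_div B y"
  define b where "b = [:poly B y:]"
  have B_eq: "B = L * B' + b"
    using synthetic_div_correct'[of y B] by (simp add: B'_def b_def L_def)
  have b_zero: "poly_zero_mod r b"
    using \<open>r dvd poly B y\<close> by (simp add: b_def)
  show ?case
  proof (cases "degree B = 0")
    case True
    then have "B = b"
      unfolding b_def by (metis degree_0_id poly_const_conv)
    with b_zero show ?thesis
      by simp
  next
    case False
    have "L * (A' * A' - L * h * (B' * B')) = Q + h * (b * (2 * L * B' + b))"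
      unfolding Q_def B_eq by (simp add: algebra_simps)
    also have "poly_zero_mod r \<dots>"
      by (rule poly_zero_mod_add[OF Q_zero poly_zero_mod_mult_right[OF poly_zero_mod_mult_left[OF b_zero]]])
    finally have "poly_zero_mod r (A' * A' - [:-y, 1:] * h * (B' * B'))"
      unfolding L_def by (rule L_factor[unfolded L_def])
    moreover have "degree B' < degree B"
      using False by (simp add: B'_def degree_synthetic_div)
    ultimately have "poly_zero_mod r B'"
      using less.hyps by blast
    then show ?thesis
      unfolding B_eq by (rule poly_zero_mod_add[OF poly_zero_mod_mult_right b_zero])
  qed
qed

section \<open>Towers of quadratic extensions\<close>

text \<open>Adj a b stands for a + b \<surd>F_k, where k is the height of a, so a tree of level k
  represents an element of \<int>[x][\<surd>F_0, ..., \<surd>F_(k-1)]; teval s x k evaluates it at x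
  with s l in place of \<surd>F_l.\<close>
datatype qtower = Base "int poly" | Adj qtower qtower

fun level :: "nat \<Rightarrow> qtower \<Rightarrow> bool" where
  "level 0 (Base p) \<longleftrightarrow> True"
| "level (Suc k) (Adj a b) \<longleftrightarrow> level k a \<and> level k b"
| "level _ _ \<longleftrightarrow> False"

lemma level_0E [elim!]: "level 0 t \<Longrightarrow> (\<And>p. t = Base p \<Longrightarrow> P) \<Longrightarrow> P"
  by (cases t) auto

lemma level_SucE [elim!]:
  "level (Suc k) t \<Longrightarrow> (\<And>a b. t = Adj a b \<Longrightarrow> level k a \<Longrightarrow> level k b \<Longrightarrow> P) \<Longrightarrow> P"
  by (cases t) auto

fun height :: "qtower \<Rightarrow> nat" where
  "height (Base p) = 0"
| "height (Adj a b) = Suc (height a)"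

lemma height_level [simp]: "level k t \<Longrightarrow> height t = k"
  by (induction k arbitrary: t) auto

text \<open>On trees of different shapes the operations return the junk value Base 0. It is zero
  modulo every r, so the closure properties of tzero_mod below need no level hypotheses.\<close>
instantiation qtower :: "{plus, uminus, minus}"
begin

fun plus_qtower :: "qtower \<Rightarrow> qtower \<Rightarrow> qtower" where
  "plus_qtower (Base p) (Base q) = Base (p + q)"
| "plus_qtower (Adj a b) (Adj c d) = Adj (plus_qtower a c) (plus_qtower b d)"
| "plus_qtower _ _ = Base 0"

fun uminus_qtower :: "qtower \<Rightarrow> qtower" where
  "uminus_qtower (Base p) = Base (- p)"
| "uminus_qtower (Adj a b) = Adj (uminus_qtower a) (uminus_qtower b)"

definition minus_qtower :: "qtower \<Rightarrow> qtower \<Rightarrow> qtower" where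
  "minus_qtower a b = a + - b"

instance ..

end

fun tscale :: "int poly \<Rightarrow> qtower \<Rightarrow> qtower" where
  "tscale g (Base p) = Base (g * p)"
| "tscale g (Adj a b) = Adj (tscale g a) (tscale g b)"

fun tconst :: "nat \<Rightarrow> int poly \<Rightarrow> qtower" where
  "tconst 0 p = Base p"
| "tconst (Suc k) p = Adj (tconst k p) (tconst k 0)"

fun tmult :: "(nat \<Rightarrow> int poly) \<Rightarrow> qtower \<Rightarrow> qtower \<Rightarrow> qtower" where
  "tmult F (Base p) (Base q) = Base (p * q)"
| "tmult F (Adj a b) (Adj c d) =
     Adj (tmult F a c + tscale (F (height a)) (tmult F b d)) (tmult F a d + tmult F b c)"
| "tmult F _ _ = Base 0"

fun teval :: "(nat \<Rightarrow> 'a) \<Rightarrow> 'a \<Rightarrow> nat \<Rightarrow> qtower \<Rightarrow> 'a::comm_ring_1" where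
  "teval s x 0 (Base p) = ipoly p x"
| "teval s x (Suc k) (Adj a b) = teval s x k a + s k * teval s x k b"
| "teval s x _ _ = 0"

fun tdegree :: "qtower \<Rightarrow> nat" where
  "tdegree (Base p) = degree p"
| "tdegree (Adj a b) = max (tdegree a) (tdegree b)"

fun tzero_mod :: "int \<Rightarrow> qtower \<Rightarrow> bool" where
  "tzero_mod r (Base p) \<longleftrightarrow> poly_zero_mod r p"
| "tzero_mod r (Adj a b) \<longleftrightarrow> tzero_mod r a \<and> tzero_mod r b"

definition sqrts :: "(nat \<Rightarrow> int poly) \<Rightarrow> nat \<Rightarrow> 'a::comm_ring_1 \<Rightarrow> (nat \<Rightarrow> 'a) \<Rightarrow> bool" where
  "sqrts F k x s \<longleftrightarrow> (\<forall>l<k. s l ^ 2 = ipoly (F l) x)"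

definition sqrts_mod :: "int \<Rightarrow> (nat \<Rightarrow> int poly) \<Rightarrow> nat \<Rightarrow> int \<Rightarrow> (nat \<Rightarrow> int) \<Rightarrow> bool" where
  "sqrts_mod r F k x s \<longleftrightarrow> (\<forall>l<k. r dvd s l ^ 2 - poly (F l) x)"

lemma level_add [simp]: "level k a \<Longrightarrow> level k b \<Longrightarrow> level k (a + b)"
  by (induction k arbitrary: a b) auto

lemma level_uminus [simp]: "level k a \<Longrightarrow> level k (- a)"
  by (induction k arbitrary: a) auto

lemma level_minus [simp]: "level k a \<Longrightarrow> level k b \<Longrightarrow> level k (a - b)"
  by (simp add: minus_qtower_def)

lemma level_tscale [simp]: "level k a \<Longrightarrow> level k (tscale g a)"
  by (induction k arbitrary: a) auto

lemma level_tmult [simp]: "level k a \<Longrightarrow> level k b \<Longrightarrow> level k (tmult F a b)"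
  by (induction k arbitrary: a b) auto

lemma level_tconst [simp]: "level k (tconst k p)"
  by (induction k arbitrary: p) auto

lemma teval_add [simp]:
  "level k a \<Longrightarrow> level k b \<Longrightarrow> teval s x k (a + b) = teval s x k a + teval s x k b"
  by (induction k arbitrary: a b) (auto simp: algebra_simps)

lemma teval_uminus [simp]: "level k a \<Longrightarrow> teval s x k (- a) = - teval s x k a"
  by (induction k arbitrary: a) (auto simp: algebra_simps)

lemma teval_minus [simp]:
  "level k a \<Longrightarrow> level k b \<Longrightarrow> teval s x k (a - b) = teval s x k a - teval s x k b"
  by (simp add: minus_qtower_def)

lemma teval_tscale [simp]: "level k a \<Longrightarrow> teval s x k (tscale g a) = ipoly g x * teval s x k a"
  by (induction k arbitrary: a) (auto simp: algebra_simps)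

lemma teval_tconst [simp]: "teval s x k (tconst k p) = ipoly p x"
  by (induction k arbitrary: p) auto

lemma teval_tmult [simp]:
  "sqrts F k x s \<Longrightarrow> level k a \<Longrightarrow> level k b \<Longrightarrow>
    teval s x k (tmult F a b) = teval s x k a * teval s x k b"
proof (induction k arbitrary: a b)
  case (Suc k)
  have "sqrts F k x s" and sq: "s k ^ 2 = ipoly (F k) x"
    using Suc.prems(1) by (auto simp: sqrts_def)
  with Suc show ?case
    by (auto simp: sq[symmetric] algebra_simps power2_eq_square)
qed auto

lemma teval_fun_upd:
  "level k a \<Longrightarrow> k \<le> l \<Longrightarrow> teval (s(l := c)) x k a = teval s x k a"
  by (induction k arbitrary: a) auto

text \<open>Over \<complex>, away from the finitely many zeros of F_k, both signs of
  \<surd>F_k are available; adding and subtracting the two evaluations of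
  a + b \<surd>F_k separates a from b.\<close>
lemma tower_eq_0_if_teval_eq_0:
  assumes "\<forall>l<k. F l \<noteq> 0" "level k t" "finite E"
    "\<And>(x::complex) s. x \<notin> E \<Longrightarrow> sqrts F k x s \<Longrightarrow> teval s x k t = 0"
  shows "t = tconst k 0"
  using assms
proof (induction k arbitrary: t E)
  case 0
  then obtain p where t: "t = Base p"
    by auto
  have "- E \<subseteq> {x::complex. ipoly p x = 0}"
    using "0.prems"(4) by (auto simp: t sqrts_def)
  moreover have "infinite (- E :: complex set)"
    using "0.prems"(3) by (simp add: Compl_eq_Diff_UNIV infinite_UNIV_char_0)
  ultimately have "p = 0"
    using finite_ipoly_roots finite_subset by blast
  then show ?case
    by (simp add: t)
next
  case (Suc k)
  from Suc.prems(2) obtain a b where t: "t = Adj a b" and ab: "level k a" "level k b"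
    by auto
  define E' where "E' = E \<union> {x::complex. ipoly (F k) x = 0}"
  have "finite E'"
    using Suc.prems(1,3) finite_ipoly_roots[of "F k"] by (simp add: E'_def)
  moreover have "teval s x k a = 0 \<and> teval s x k b = 0" if "x \<notin> E'" "sqrts F k x s" for x s
  proof -
    define c where "c = csqrt (ipoly (F k) x)"
    have "c \<noteq> 0"
      using that(1) by (simp add: c_def E'_def)
    have "sqrts F (Suc k) x (s(k := c))" "sqrts F (Suc k) x (s(k := - c))"
      using that(2) by (auto simp: sqrts_def c_def less_Suc_eq)
    then have "teval (s(k := c)) x (Suc k) t = 0" "teval (s(k := - c)) x (Suc k) t = 0"
      using Suc.prems(4) that(1) by (auto simp: E'_def)
    then have "teval s x k a + c * teval s x k b = 0" "teval s x k a - c * teval s x k b = 0"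
      by (simp_all add: t teval_fun_upd[OF ab(1)] teval_fun_upd[OF ab(2)])
    then have "2 * c * teval s x k b = 0" "2 * teval s x k a = 0"
      by (simp_all add: algebra_simps)
    then show ?thesis
      using \<open>c \<noteq> 0\<close> by simp
  qed
  ultimately have "a = tconst k 0" "b = tconst k 0"
    using Suc.IH[of a E'] Suc.IH[of b E'] Suc.prems(1) ab by auto
  then show ?case
    by (simp add: t)
qed

lemma tower_eq_if_diff_eq_0: "level k a \<Longrightarrow> level k b \<Longrightarrow> a - b = tconst k 0 \<Longrightarrow> a = b"
  by (induction k arbitrary: a b) (auto simp: minus_qtower_def)

lemma tower_eqI:
  assumes "\<forall>l<k. F l \<noteq> 0" "level k a" "level k b"
    "\<And>(x::complex) s. sqrts F k x s \<Longrightarrow> teval s x k a = teval s x k b"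
  shows "a = b"
proof -
  have "a - b = tconst k 0"
    by (rule tower_eq_0_if_teval_eq_0[of k F _ "{}"]) (use assms in auto)
  then show ?thesis
    using assms(2,3) tower_eq_if_diff_eq_0 by blast
qed

lemma tzero_mod_add: "tzero_mod r a \<Longrightarrow> tzero_mod r b \<Longrightarrow> tzero_mod r (a + b)"
  by (induction a b rule: plus_qtower.induct) (auto simp: poly_zero_mod_add)

lemma tzero_mod_uminus [simp]: "tzero_mod r (- a) \<longleftrightarrow> tzero_mod r a"
  by (induction a) auto

lemma tzero_mod_minus: "tzero_mod r a \<Longrightarrow> tzero_mod r b \<Longrightarrow> tzero_mod r (a - b)"
  by (simp add: minus_qtower_def tzero_mod_add)

lemma tzero_mod_tscale: "tzero_mod r a \<Longrightarrow> tzero_mod r (tscale g a)"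
  by (induction a) (auto simp: poly_zero_mod_mult_right)

lemma tzero_mod_tmult: "tzero_mod r a \<or> tzero_mod r b \<Longrightarrow> tzero_mod r (tmult F a b)"
  by (induction F a b rule: tmult.induct)
    (auto simp: poly_zero_mod_mult_left poly_zero_mod_mult_right intro!: tzero_mod_add tzero_mod_tscale)

lemma tzero_mod_tmult_left: "tzero_mod r a \<Longrightarrow> tzero_mod r (tmult F a b)"
  and tzero_mod_tmult_right: "tzero_mod r b \<Longrightarrow> tzero_mod r (tmult F a b)"
  by (simp_all add: tzero_mod_tmult)

lemmas tzero_mod_intros =
  tzero_mod_add tzero_mod_minus tzero_mod_tscale tzero_mod_tmult_left tzero_mod_tmult_right

lemma tzero_mod_tconst [simp]: "tzero_mod r (tconst k p) \<longleftrightarrow> poly_zero_mod r p"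
  by (induction k arbitrary: p) auto

lemma tzero_mod_double:
  assumes "prime r" "r > 2"
  shows "tzero_mod r (a + a) \<Longrightarrow> tzero_mod r a"
proof (induction a)
  case (Base p)
  then have "poly_zero_mod r (p + p)"
    by (simp only: plus_qtower.simps tzero_mod.simps)
  then show ?case
    using poly_zero_mod_double[OF assms] by simp
next
  case (Adj a1 a2)
  then have "tzero_mod r (a1 + a1)" "tzero_mod r (a2 + a2)"
    by (simp_all only: plus_qtower.simps tzero_mod.simps)
  with Adj.IH show ?case
    by simp
qed

lemma teval_tmult_mod:
  assumes "sqrts_mod r F k x s" "level k a" "level k b"
  shows "r dvd teval s x k (tmult F a b) - teval s x k a * teval s x k b"
  using assms
proof (induction k arbitrary: a b)
  case (Suc k)
  from Suc.prems(2,3) obtain a1 a2 b1 b2 where ab: "a = Adj a1 a2" "b = Adj b1 b2"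
    and levels: "level k a1" "level k a2" "level k b1" "level k b2"
    by auto
  have "sqrts_mod r F k x s" and sq: "r dvd s k ^ 2 - poly (F k) x"
    using Suc.prems(1) by (simp_all add: sqrts_mod_def)
  let ?e = "teval s x k"
  let ?d = "\<lambda>u v. ?e (tmult F u v) - ?e u * ?e v"
  have IH: "r dvd ?d a1 b1" "r dvd ?d a2 b2" "r dvd ?d a1 b2" "r dvd ?d a2 b1"
    using Suc.IH[OF \<open>sqrts_mod r F k x s\<close>] levels by blast+
  have "teval s x (Suc k) (tmult F a b) - teval s x (Suc k) a * teval s x (Suc k) b
     = ?d a1 b1 + poly (F k) x * ?d a2 b2 + s k * (?d a1 b2 + ?d a2 b1)
       - ?e a2 * ?e b2 * (s k ^ 2 - poly (F k) x)"
    using levels by (simp add: ab algebra_simps power2_eq_square)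
  also have "r dvd \<dots>"
    by (rule dvd_diff[OF dvd_add[OF dvd_add[OF IH(1) dvd_mult[OF IH(2)]]
          dvd_mult[OF dvd_add[OF IH(3,4)]]] dvd_mult[OF sq]])
  finally show ?case .
qed auto

lemma dvd_teval_norm:
  assumes "sqrts_mod r F (Suc k) x s" "level k a" "level k b" "r dvd teval s x (Suc k) (Adj a b)"
  shows "r dvd teval s x k (tmult F a a - tscale (F k) (tmult F b b))"
proof -
  have s: "sqrts_mod r F k x s" and sk: "r dvd s k ^ 2 - poly (F k) x"
    using assms(1) by (simp_all add: sqrts_mod_def)
  let ?a = "teval s x k a" and ?b = "teval s x k b"
  have "r dvd ?a + s k * ?b"
    using assms(4) by simp
  have "teval s x k (tmult F a a - tscale (F k) (tmult F b b)) = (teval s x k (tmult F a a) - ?a * ?a)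
      - poly (F k) x * (teval s x k (tmult F b b) - ?b * ?b)
      + (?a + s k * ?b) * (?a - s k * ?b) + ?b * ?b * (s k ^ 2 - poly (F k) x)"
    using assms(2,3) by (simp add: algebra_simps power2_eq_square)
  also have "r dvd \<dots>"
    by (rule dvd_add[OF dvd_add[OF dvd_diff[OF teval_tmult_mod[OF s assms(2,2)]
          dvd_mult[OF teval_tmult_mod[OF s assms(3,3)]]] dvd_mult2[OF \<open>r dvd ?a + s k * ?b\<close>]]
          dvd_mult[OF sk]])
  finally show ?thesis .
qed

lemma tdegree_add: "level k a \<Longrightarrow> level k b \<Longrightarrow> tdegree (a + b) \<le> max (tdegree a) (tdegree b)"
proof (induction k arbitrary: a b)
  case (Suc k)
  then obtain a1 a2 b1 b2 where "a = Adj a1 a2" "b = Adj b1 b2"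
    "level k a1" "level k a2" "level k b1" "level k b2"
    by auto
  with Suc.IH show ?case
    by fastforce
qed (auto simp: degree_add_le_max)

lemma tdegree_uminus [simp]: "level k a \<Longrightarrow> tdegree (- a) = tdegree a"
  by (induction k arbitrary: a) auto

lemma tdegree_minus: "level k a \<Longrightarrow> level k b \<Longrightarrow> tdegree (a - b) \<le> max (tdegree a) (tdegree b)"
  unfolding minus_qtower_def using tdegree_add[of k a "- b"] by simp

lemma tdegree_tscale: "level k a \<Longrightarrow> tdegree (tscale g a) \<le> degree g + tdegree a"
proof (induction k arbitrary: a)
  case (Suc k)
  then obtain a1 a2 where "a = Adj a1 a2" "level k a1" "level k a2"
    by auto
  with Suc.IH show ?case
    by fastforce
qed (auto simp: degree_mult_le)

lemma tdegree_tconst [simp]: "tdegree (tconst k p) = degree p"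
  by (induction k arbitrary: p) auto

text \<open>Multiplying out \<surd>F_l \<surd>F_l = F_l raises the degree by at most one per level.\<close>
lemma tdegree_tmult:
  assumes "\<And>l. degree (F l) \<le> 1"
  shows "level k a \<Longrightarrow> level k b \<Longrightarrow> tdegree (tmult F a b) \<le> tdegree a + tdegree b + k"
proof (induction k arbitrary: a b)
  case (Suc k)
  then obtain a1 a2 b1 b2 where ab: "a = Adj a1 a2" "b = Adj b1 b2"
    and levels: "level k a1" "level k a2" "level k b1" "level k b2"
    by auto
  have "tdegree (tscale (F k) (tmult F a2 b2)) \<le> 1 + tdegree (tmult F a2 b2)"
    using tdegree_tscale[of k "tmult F a2 b2" "F k"] assms[of k] levels by simp
  then show ?case
    using Suc.IH[of a1 b1] Suc.IH[of a2 b2] Suc.IH[of a1 b2] Suc.IH[of a2 b1] levels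
      tdegree_add[of k "tmult F a1 b1" "tscale (F k) (tmult F a2 b2)"]
      tdegree_add[of k "tmult F a1 b2" "tmult F a2 b1"]
    by (fastforce simp: ab)
qed (auto simp: degree_mult_le)

fun tlinear :: "(nat \<Rightarrow> int) \<Rightarrow> nat \<Rightarrow> qtower" where
  "tlinear e 0 = Base 0"
| "tlinear e (Suc k) = Adj (tlinear e k) (tconst k [:e k:])"

lemma level_tlinear [simp]: "level k (tlinear e k)"
  by (induction k) auto

lemma tdegree_tlinear [simp]: "tdegree (tlinear e k) = 0"
  by (induction k) auto

lemma teval_tlinear: "teval s (x::int) k (tlinear e k) = (\<Sum>l<k. e l * s l)"
  by (induction k) (auto simp: algebra_simps)

section \<open>Independence of square roots of distinct linear forms modulo r\<close>

fun root_bound :: "nat \<Rightarrow> nat \<Rightarrow> nat" where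
  "root_bound 0 d = d"
| "root_bound (Suc k) d = root_bound k (2 * d + k + 1)"

locale distinct_radicands =
  fixes r j :: int and y :: "nat \<Rightarrow> int" and m :: nat
  assumes prime_r: "prime r" and r_gt_2: "r > 2" and not_dvd_j: "\<not> r dvd j"
    and y_distinct: "\<And>l l'. l < m \<Longrightarrow> l' < m \<Longrightarrow> l \<noteq> l' \<Longrightarrow> \<not> r dvd y l - y l'"
begin

definition F :: "nat \<Rightarrow> int poly" where
  "F l = [:- (j * y l), j:]"

definition G :: "nat set \<Rightarrow> int \<Rightarrow> int poly" where
  "G T c = smult c (\<Prod>l\<in>T. F l)"

abbreviation tmult_F :: "qtower \<Rightarrow> qtower \<Rightarrow> qtower" (infixl "\<otimes>" 70) where
  "a \<otimes> b \<equiv> tmult F a b"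

lemma F_nonzero: "F l \<noteq> 0"
  using not_dvd_j by (auto simp: F_def)

lemma degree_F: "degree (F l) \<le> 1"
  by (simp add: F_def)

lemma poly_F: "poly (F l) x = j * (x - y l)"
  by (simp add: F_def algebra_simps)

lemma G_singleton: "G {k} 1 = F k"
  by (simp add: G_def)

lemma G_insert: "finite T \<Longrightarrow> k \<notin> T \<Longrightarrow> G (insert k T) c = F k * G T c"
  by (simp add: G_def)

lemma tower_identity:
  "level k a \<Longrightarrow> level k b \<Longrightarrow> (\<And>(x::complex) s. sqrts F k x s \<Longrightarrow> teval s x k a = teval s x k b)
    \<Longrightarrow> a = b"
  using tower_eqI[of k F a b] F_nonzero by blast

definition domain_mod :: "nat \<Rightarrow> bool" where
  "domain_mod k \<longleftrightarrow> (\<forall>a b. level k a \<longrightarrow> level k b \<longrightarrow>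
     tzero_mod r (a \<otimes> b) \<longrightarrow> tzero_mod r a \<or> tzero_mod r b)"

definition nonsquare_mod :: "nat \<Rightarrow> int poly \<Rightarrow> bool" where
  "nonsquare_mod k g \<longleftrightarrow> (\<forall>a b. level k a \<longrightarrow> level k b \<longrightarrow>
     tzero_mod r (a \<otimes> a - tscale g (b \<otimes> b)) \<longrightarrow> tzero_mod r b)"

lemma domain_mod_0: "domain_mod 0"
  unfolding domain_mod_def by (auto dest: poly_zero_mod_mult_prime[OF prime_r])

text \<open>G T c = (x - y_t) h with h(y_t) nonzero modulo r, since the y_l are distinct.\<close>
lemma nonsquare_mod_0:
  assumes "T \<subseteq> {..<m}" "T \<noteq> {}" "\<not> r dvd c"
  shows "nonsquare_mod 0 (G T c)"
  unfolding nonsquare_mod_def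
proof (intro allI impI)
  fix A B assume "level 0 A" "level 0 B" and zero: "tzero_mod r (A \<otimes> A - tscale (G T c) (B \<otimes> B))"
  then obtain a b where AB: "A = Base a" "B = Base b"
    by auto
  obtain t where t: "t \<in> T"
    using assms(2) by auto
  have "finite T"
    using assms(1) finite_subset by blast
  define h where "h = smult (c * j) (\<Prod>l\<in>T - {t}. F l)"
  have "G T c = smult c (F t * (\<Prod>l\<in>T - {t}. F l))"
    using \<open>finite T\<close> t by (simp add: G_def prod.remove)
  also have "F t = smult j [:- y t, 1:]"
    by (simp add: F_def)
  also have "smult c (smult j L * P) = L * smult (c * j) P" for L P :: "int poly"
    by (simp add: mult.commute)
  finally have G_eq: "G T c = [:- y t, 1:] * h"
    by (simp add: h_def)
  have "\<not> r dvd poly h (y t)"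
  proof
    assume "r dvd poly h (y t)"
    then have "r dvd c * j * (\<Prod>l\<in>T - {t}. j * (y t - y l))"
      by (simp add: h_def poly_prod poly_F)
    then have "r dvd c \<or> r dvd j \<or> (\<exists>l\<in>T - {t}. r dvd j * (y t - y l))"
      using prime_r \<open>finite T\<close> by (simp add: prime_dvd_mult_iff prime_dvd_prod_iff)
    then show False
      using assms not_dvd_j y_distinct[of t] t prime_r by (auto simp: prime_dvd_mult_iff)
  qed
  moreover have "poly_zero_mod r (a * a - [:- y t, 1:] * h * (b * b))"
    using zero unfolding AB G_eq minus_qtower_def diff_conv_add_uminus
    by (simp only: tmult.simps tscale.simps uminus_qtower.simps plus_qtower.simps
        tzero_mod.simps mult.assoc)
  ultimately have "poly_zero_mod r b"
    by (rule poly_zero_mod_square_linear_factor[OF prime_r])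
  then show "tzero_mod r B"
    by (simp add: AB)
qed

lemma tzero_mod_norm:
  assumes "domain_mod k" "nonsquare_mod k (F k)" "level k a" "level k b"
    and "tzero_mod r (a \<otimes> a - tscale (F k) (b \<otimes> b))"
  shows "tzero_mod r a \<and> tzero_mod r b"
proof -
  have "tzero_mod r b"
    using assms(2-5) unfolding nonsquare_mod_def by blast
  then have "tzero_mod r ((a \<otimes> a - tscale (F k) (b \<otimes> b)) + tscale (F k) (b \<otimes> b))"
    using assms(5) by (blast intro: tzero_mod_intros)
  also have "(a \<otimes> a - tscale (F k) (b \<otimes> b)) + tscale (F k) (b \<otimes> b) = a \<otimes> a"
    by (rule tower_identity[of k]) (use assms(3,4) in simp_all)
  finally show ?thesis
    using assms(1,3) \<open>tzero_mod r b\<close> unfolding domain_mod_def by blast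
qed

text \<open>Multiplying a zero product by the conjugate of the second factor leaves the first
  factor times the norm of the second, which is nonzero by the non-square property.\<close>
lemma domain_mod_Suc:
  assumes "domain_mod k" "nonsquare_mod k (F k)"
  shows "domain_mod (Suc k)"
  unfolding domain_mod_def
proof (intro allI impI)
  fix x z assume "level (Suc k) x" "level (Suc k) z" and zero: "tzero_mod r (x \<otimes> z)"
  then obtain a b c d where xz: "x = Adj a b" "z = Adj c d"
    and levels: "level k a" "level k b" "level k c" "level k d"
    by blast
  define U1 where "U1 = a \<otimes> c + tscale (F k) (b \<otimes> d)"
  define U2 where "U2 = a \<otimes> d + b \<otimes> c"
  define N where "N = c \<otimes> c - tscale (F k) (d \<otimes> d)"
  have U_zero: "tzero_mod r U1" "tzero_mod r U2"
    using zero levels by (simp_all add: xz U1_def U2_def)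
  have "level k N"
    using levels by (simp add: N_def)
  show "tzero_mod r x \<or> tzero_mod r z"
  proof (cases "tzero_mod r N")
    case True
    then show ?thesis
      using tzero_mod_norm[OF assms levels(3,4)] by (simp add: xz N_def)
  next
    case False
    have "tzero_mod r (U1 \<otimes> c - tscale (F k) (U2 \<otimes> d))"
      using U_zero by (blast intro: tzero_mod_intros)
    also have "U1 \<otimes> c - tscale (F k) (U2 \<otimes> d) = a \<otimes> N"
      by (rule tower_identity[of k]) (use levels in \<open>simp_all add: N_def U1_def U2_def algebra_simps\<close>)
    finally have "tzero_mod r a"
      using assms(1) levels \<open>level k N\<close> False unfolding domain_mod_def by blast
    have "tzero_mod r (U2 \<otimes> c - U1 \<otimes> d)"
      using U_zero by (blast intro: tzero_mod_intros)
    also have "U2 \<otimes> c - U1 \<otimes> d = b \<otimes> N"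
      by (rule tower_identity[of k]) (use levels in \<open>simp_all add: N_def U1_def U2_def algebra_simps\<close>)
    finally have "tzero_mod r b"
      using assms(1) levels \<open>level k N\<close> False unfolding domain_mod_def by blast
    with \<open>tzero_mod r a\<close> show ?thesis
      by (simp add: xz)
  qed
qed

text \<open>Write A = a + b \<surd>F_k, B = c + d \<surd>F_k and A B' = p + q \<surd>F_k with the
  conjugate B' = c - d \<surd>F_k. From A^2 = g B^2 we get (p + q \<surd>F_k)^2 = g N^2 for the norm
  N = c^2 - F_k d^2, so p q = 0 and either p^2 = g N^2 or (F_k q)^2 = F_k g N^2. Both
  g and F_k g are non-squares one level down, so N = 0, whence B = 0.\<close>
lemma nonsquare_mod_Suc:
  assumes "finite T" "k \<notin> T"
    and "domain_mod k" "nonsquare_mod k (F k)"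
    and "nonsquare_mod k (G T c0)" "nonsquare_mod k (G (insert k T) c0)"
  shows "nonsquare_mod (Suc k) (G T c0)"
  unfolding nonsquare_mod_def
proof (intro allI impI)
  fix A B assume "level (Suc k) A" "level (Suc k) B"
    and zero: "tzero_mod r (A \<otimes> A - tscale (G T c0) (B \<otimes> B))"
  then obtain a b c d where AB: "A = Adj a b" "B = Adj c d"
    and levels: "level k a" "level k b" "level k c" "level k d"
    by blast
  define f where "f = F k"
  define g where "g = G T c0"
  define E1 where "E1 = a \<otimes> a + tscale f (b \<otimes> b) - tscale g (c \<otimes> c + tscale f (d \<otimes> d))"
  define E2 where "E2 = a \<otimes> b - tscale g (c \<otimes> d)"
  define p where "p = a \<otimes> c - tscale f (b \<otimes> d)"
  define q where "q = b \<otimes> c - a \<otimes> d"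
  define W where "W = c \<otimes> c + tscale f (d \<otimes> d)"
  define N where "N = c \<otimes> c - tscale f (d \<otimes> d)"
  define R where "R = p \<otimes> p + tscale f (q \<otimes> q) - tscale g (N \<otimes> N)"
  have L: "level k E1" "level k E2" "level k p" "level k q" "level k W" "level k N" "level k R"
    "level k (c \<otimes> d)"
    using levels by (simp_all add: E1_def E2_def p_def q_def W_def N_def R_def)
  have E1_zero: "tzero_mod r E1"
    using zero levels by (simp add: AB E1_def g_def f_def minus_qtower_def)
  have "tzero_mod r (a \<otimes> b + b \<otimes> a - tscale g (c \<otimes> d + d \<otimes> c))"
    using zero levels by (simp add: AB g_def minus_qtower_def)
  also have "a \<otimes> b + b \<otimes> a - tscale g (c \<otimes> d + d \<otimes> c) = E2 + E2"
    by (rule tower_identity[of k]) (use levels in \<open>simp_all add: E2_def algebra_simps\<close>)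
  finally have E2_zero: "tzero_mod r E2"
    by (rule tzero_mod_double[OF prime_r r_gt_2])
  have "tzero_mod r (E2 \<otimes> W - (c \<otimes> d) \<otimes> E1)"
    using E1_zero E2_zero by (blast intro: tzero_mod_intros)
  also have "E2 \<otimes> W - (c \<otimes> d) \<otimes> E1 = p \<otimes> q"
    by (rule tower_identity[of k]) (use levels in \<open>simp_all add: E1_def E2_def p_def q_def W_def
        algebra_simps\<close>)
  finally have pq: "tzero_mod r p \<or> tzero_mod r q"
    using assms(3) L unfolding domain_mod_def by blast
  have "tzero_mod r (E1 \<otimes> W - tscale (smult 4 f) ((c \<otimes> d) \<otimes> E2))"
    using E1_zero E2_zero by (blast intro: tzero_mod_intros)
  also have "E1 \<otimes> W - tscale (smult 4 f) ((c \<otimes> d) \<otimes> E2) = R"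
    by (rule tower_identity[of k]) (use levels in \<open>simp_all add: R_def E1_def E2_def p_def q_def W_def
        N_def algebra_simps power2_eq_square\<close>)
  finally have R_zero: "tzero_mod r R" .
  have "tzero_mod r N"
  proof (cases "tzero_mod r q")
    case True
    then have "tzero_mod r (R - tscale f (q \<otimes> q))"
      using R_zero by (blast intro: tzero_mod_intros)
    also have "R - tscale f (q \<otimes> q) = p \<otimes> p - tscale g (N \<otimes> N)"
      by (rule tower_identity[of k]) (use levels L in \<open>simp_all add: R_def algebra_simps\<close>)
    finally show ?thesis
      using assms(5) L unfolding nonsquare_mod_def g_def by blast
  next
    case False
    then have "tzero_mod r (tscale f R - tscale f (p \<otimes> p))"
      using pq R_zero by (blast intro: tzero_mod_intros)
    also have "tscale f R - tscale f (p \<otimes> p)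
        = tscale f q \<otimes> tscale f q - tscale (G (insert k T) c0) (N \<otimes> N)"
      unfolding G_insert[OF assms(1,2)] f_def[symmetric] g_def[symmetric]
      by (rule tower_identity[of k]) (use levels L in \<open>simp_all add: R_def algebra_simps\<close>)
    finally show ?thesis
      using assms(6) L(6) level_tscale[OF L(4)] unfolding nonsquare_mod_def by blast
  qed
  then show "tzero_mod r B"
    using tzero_mod_norm[OF assms(3,4) levels(3,4)] by (simp add: AB N_def f_def)
qed

lemma domain_mod_and_nonsquare_mod:
  "k \<le> m \<Longrightarrow> domain_mod k \<and>
    (\<forall>T c. T \<subseteq> {k..<m} \<longrightarrow> T \<noteq> {} \<longrightarrow> \<not> r dvd c \<longrightarrow> nonsquare_mod k (G T c))"
proof (induction k)
  case 0
  then show ?case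
    using domain_mod_0 nonsquare_mod_0 by (auto simp: lessThan_atLeast0)
next
  case (Suc k)
  then have IH: "domain_mod k"
    "\<And>T c. T \<subseteq> {k..<m} \<Longrightarrow> T \<noteq> {} \<Longrightarrow> \<not> r dvd c \<Longrightarrow> nonsquare_mod k (G T c)"
    by auto
  have "nonsquare_mod k (F k)"
    using IH(2)[of "{k}" 1] Suc.prems r_gt_2 by (simp add: G_singleton)
  moreover have "nonsquare_mod (Suc k) (G T c)"
    if "T \<subseteq> {Suc k..<m}" "T \<noteq> {}" "\<not> r dvd c" for T c
  proof (rule nonsquare_mod_Suc)
    show "finite T" "k \<notin> T"
      using that(1) finite_subset by auto
    show "nonsquare_mod k (G T c)" "nonsquare_mod k (G (insert k T) c)"
      using that Suc.prems by (auto intro!: IH(2))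
  qed (use IH(1) \<open>nonsquare_mod k (F k)\<close> in auto)
  ultimately show ?case
    using domain_mod_Suc[OF IH(1)] by blast
qed

text \<open>Induction down the tower: the norm of a nonzero element is nonzero, and its degree is at
  most 2 d + k + 1.\<close>
lemma card_roots_tower:
  "k \<le> m \<Longrightarrow> level k P \<Longrightarrow> \<not> tzero_mod r P \<Longrightarrow> tdegree P \<le> d \<Longrightarrow>
    card {x \<in> {0..<r}. \<exists>s. sqrts_mod r F k x s \<and> r dvd teval s x k P} \<le> root_bound k d"
proof (induction k arbitrary: P d)
  case 0
  then obtain p where "P = Base p"
    by auto
  with 0 show ?case
    using card_roots_mod_prime[OF prime_r, of p] by (simp add: sqrts_mod_def)
next
  case (Suc k)
  obtain a b where P: "P = Adj a b" and levels: "level k a" "level k b"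
    using Suc.prems(2) by blast
  have "domain_mod k" "nonsquare_mod k (F k)"
    using domain_mod_and_nonsquare_mod[of k] Suc.prems(1) r_gt_2 by (auto simp: G_singleton[symmetric])
  define Q where "Q = a \<otimes> a - tscale (F k) (b \<otimes> b)"
  have "level k Q"
    using levels by (simp add: Q_def)
  have "\<not> tzero_mod r Q"
    using tzero_mod_norm[OF \<open>domain_mod k\<close> \<open>nonsquare_mod k (F k)\<close> levels] Suc.prems(3)
    by (auto simp: Q_def P)
  have "tdegree a \<le> d" "tdegree b \<le> d"
    using Suc.prems(4) by (simp_all add: P)
  then have "tdegree (a \<otimes> a) \<le> 2 * d + k" "tdegree (b \<otimes> b) \<le> 2 * d + k"
    using tdegree_tmult[of F, OF degree_F levels(1,1)] tdegree_tmult[of F, OF degree_F levels(2,2)]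
    by linarith+
  then have "tdegree Q \<le> 2 * d + k + 1"
    using tdegree_minus[of k "a \<otimes> a" "tscale (F k) (b \<otimes> b)"]
      tdegree_tscale[of k "b \<otimes> b" "F k"] degree_F[of k] levels
    by (simp add: Q_def)
  have "{x \<in> {0..<r}. \<exists>s. sqrts_mod r F (Suc k) x s \<and> r dvd teval s x (Suc k) P}
      \<subseteq> {x \<in> {0..<r}. \<exists>s. sqrts_mod r F k x s \<and> r dvd teval s x k Q}"
  proof safe
    fix x s assume "x \<in> {0..<r}" and s: "sqrts_mod r F (Suc k) x s"
      and "r dvd teval s x (Suc k) P"
    then have "r dvd teval s x k Q"
      using dvd_teval_norm[OF s levels] by (simp add: P Q_def)
    moreover have "sqrts_mod r F k x s"
      using s by (simp add: sqrts_mod_def)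
    ultimately show "\<exists>s. sqrts_mod r F k x s \<and> r dvd teval s x k Q"
      by blast
  qed
  then have "card {x \<in> {0..<r}. \<exists>s. sqrts_mod r F (Suc k) x s \<and> r dvd teval s x (Suc k) P}
      \<le> card {x \<in> {0..<r}. \<exists>s. sqrts_mod r F k x s \<and> r dvd teval s x k Q}"
    by (intro card_mono) (auto intro: finite_subset[of _ "{0..<r}"])
  also have "\<dots> \<le> root_bound k (2 * d + k + 1)"
    by (rule Suc.IH) (use Suc.prems(1) \<open>level k Q\<close> \<open>\<not> tzero_mod r Q\<close>
        \<open>tdegree Q \<le> 2 * d + k + 1\<close> in auto)
  finally show ?case
    by simp
qed

lemma card_roots_linear_form:
  assumes "0 < m" "\<forall>l<m. \<not> r dvd e l"
  shows "card {x \<in> {0..<r}. \<exists>s. (\<forall>l<m. r dvd s l ^ 2 - j * (x - y l)) \<and>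
           r dvd (\<Sum>l<m. e l * s l)} \<le> root_bound m 0"
proof -
  obtain k where m: "m = Suc k"
    using assms(1) not0_implies_Suc by blast
  have "\<not> tzero_mod r (tlinear e m)"
    using assms(2) by (simp add: m)
  then show ?thesis
    using card_roots_tower[of m "tlinear e m" 0]
    by (simp add: sqrts_mod_def poly_F teval_tlinear)
qed

end

section \<open>Orthogonality of additive characters\<close>

lemma ee_add: "ee (x + y) = ee x * ee y"
  by (simp add: ee_def algebra_simps exp_add[symmetric])

lemma ee_0 [simp]: "ee 0 = 1"
  by (simp add: ee_def)

lemma ee_sum: "ee (\<Sum>i\<in>A. f i) = (\<Prod>i\<in>A. ee (f i))"
  by (induction A rule: infinite_finite_induct) (simp_all add: ee_add)

lemma ee_uminus: "ee (- x) = cnj (ee x)"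
  by (simp add: ee_def exp_cnj)

lemma norm_ee [simp]: "norm (ee x) = 1"
  by (simp add: ee_def norm_exp_eq_Re)

lemma ee_eq_1_iff: "ee x = 1 \<longleftrightarrow> x \<in> \<int>"
proof -
  have "ee x = 1 \<longleftrightarrow> (\<exists>n::int. 2 * pi * x = of_int (2 * n) * pi)"
    by (simp add: ee_def exp_eq_1)
  also have "\<dots> \<longleftrightarrow> x \<in> \<int>"
    by (auto elim: Ints_cases)
  finally show ?thesis .
qed

lemma ee_of_nat_mult: "ee (real a * t) = ee t ^ a"
  by (induction a) (simp_all add: ee_add algebra_simps)

lemma sum_ee_multiples:
  fixes r :: nat and D :: int
  assumes "0 < r"
  shows "(\<Sum>a\<in>{0..<int r}. ee (real_of_int (a * D) / real r)) = (if int r dvd D then of_nat r else 0)"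
proof -
  define w where "w = ee (real_of_int D / real r)"
  have "w ^ r = 1"
    using assms by (simp add: w_def ee_of_nat_mult[symmetric] ee_eq_1_iff)
  have "(\<Sum>a\<in>{0..<int r}. ee (real_of_int (a * D) / real r)) = (\<Sum>a\<in>int ` {..<r}. ee (real_of_int (a * D) / real r))"
    by (simp add: image_atLeastZeroLessThan_int)
  also have "\<dots> = (\<Sum>a<r. w ^ a)"
    by (subst sum.reindex) (auto simp: w_def ee_of_nat_mult[symmetric] algebra_simps)
  also have "\<dots> = (if int r dvd D then of_nat r else 0)"
  proof (cases "int r dvd D")
    case True
    then have "w = 1"
      using assms by (auto simp: w_def ee_eq_1_iff)
    then show ?thesis
      using True by simp
  next
    case False
    have "w \<noteq> 1"
    proof
      assume "w = 1"
      then obtain t where "real_of_int D / real r = of_int t"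
        by (auto simp: w_def ee_eq_1_iff elim: Ints_cases)
      then have "real_of_int D = real_of_int (int r * t)"
        using assms by (simp add: field_simps)
      then have "D = int r * t"
        by linarith
      then show False
        using False by simp
    qed
    then show ?thesis
      using False \<open>w ^ r = 1\<close> by (simp add: geometric_sum)
  qed
  finally show ?thesis .
qed

lemma norm_sum_power_eq_sum_tuples:
  fixes f :: "'a \<Rightarrow> complex"
  assumes "finite X"
  shows "complex_of_real (cmod (\<Sum>x\<in>X. f x) ^ (2 * n)) =
    (\<Sum>(g, h) \<in> ({..<n} \<rightarrow>\<^sub>E X) \<times> ({..<n} \<rightarrow>\<^sub>E X). (\<Prod>i<n. f (g i)) * (\<Prod>i<n. cnj (f (h i))))"
proof -
  let ?S = "\<Sum>x\<in>X. f x"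
  have "complex_of_real (cmod ?S ^ (2 * n)) = (?S * cnj ?S) ^ n"
    by (metis complex_norm_square of_real_power power_mult)
  also have "\<dots> = (\<Prod>i<n. ?S) * (\<Prod>i<n. \<Sum>x\<in>X. cnj (f x))"
    by (simp add: power_mult_distrib)
  also have "(\<Prod>i<n. ?S) = (\<Sum>g \<in> {..<n} \<rightarrow>\<^sub>E X. \<Prod>i<n. f (g i))"
    by (rule prod_sum_PiE) (simp_all add: assms)
  also have "(\<Prod>i<n. \<Sum>x\<in>X. cnj (f x)) = (\<Sum>h \<in> {..<n} \<rightarrow>\<^sub>E X. \<Prod>i<n. cnj (f (h i)))"
    by (rule prod_sum_PiE) (simp_all add: assms)
  also have "(\<Sum>g \<in> {..<n} \<rightarrow>\<^sub>E X. \<Prod>i<n. f (g i)) * (\<Sum>h \<in> {..<n} \<rightarrow>\<^sub>E X. \<Prod>i<n. cnj (f (h i)))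
      = (\<Sum>(g, h) \<in> ({..<n} \<rightarrow>\<^sub>E X) \<times> ({..<n} \<rightarrow>\<^sub>E X). (\<Prod>i<n. f (g i)) * (\<Prod>i<n. cnj (f (h i))))"
    by (simp add: sum_product sum.cartesian_product)
  finally show ?thesis .
qed

definition congruent_pairs ::
    "nat \<Rightarrow> nat \<Rightarrow> (nat \<times> int) set \<Rightarrow> ((nat \<Rightarrow> nat \<times> int) \<times> (nat \<Rightarrow> nat \<times> int)) set" where
  "congruent_pairs r n X = {(g, h) \<in> ({..<n} \<rightarrow>\<^sub>E X) \<times> ({..<n} \<rightarrow>\<^sub>E X).
     int r dvd (\<Sum>i<n. snd (g i)) - (\<Sum>i<n. snd (h i))}"

lemma moment_le_card_congruent_pairs:
  fixes X :: "(nat \<times> int) set"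
  assumes "finite X" "0 < r"
  shows "(\<Sum>a\<in>{0..<int r}. cmod (\<Sum>x\<in>X. ee (real_of_int (a * snd x) / real r + \<xi> * real (fst x))) ^ (2 * n))
     \<le> real r * real (card (congruent_pairs r n X))"
proof -
  define P where "P = ({..<n} \<rightarrow>\<^sub>E X) \<times> ({..<n} \<rightarrow>\<^sub>E X)"
  define D where "D gh = (\<Sum>i<n. snd (fst gh i)) - (\<Sum>i<n. snd (snd gh i))"
    for gh :: "(nat \<Rightarrow> nat \<times> int) \<times> (nat \<Rightarrow> nat \<times> int)"
  define E where "E gh = (\<Sum>i<n. real (fst (fst gh i))) - (\<Sum>i<n. real (fst (snd gh i)))"
    for gh :: "(nat \<Rightarrow> nat \<times> int) \<times> (nat \<Rightarrow> nat \<times> int)"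
  define \<phi> where "\<phi> a x = ee (real_of_int (a * snd x) / real r + \<xi> * real (fst x))" for a x
  have "finite P"
    using assms(1) by (simp add: P_def finite_PiE)
  have prod_\<phi>: "(\<Prod>i<n. \<phi> a (g i)) * (\<Prod>i<n. cnj (\<phi> a (h i)))
      = ee (real_of_int (a * D (g, h)) / real r) * ee (\<xi> * E (g, h))" for a g h
  proof -
    have "(\<Prod>i<n. \<phi> a (g i)) * (\<Prod>i<n. cnj (\<phi> a (h i)))
        = ee ((\<Sum>i<n. real_of_int (a * snd (g i)) / real r + \<xi> * real (fst (g i)))
              - (\<Sum>i<n. real_of_int (a * snd (h i)) / real r + \<xi> * real (fst (h i))))"
      by (simp only: \<phi>_def ee_sum ee_add diff_conv_add_uminus ee_uminus cnj_prod)
    also have "\<dots> = ee (real_of_int (a * D (g, h)) / real r + \<xi> * E (g, h))"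
      by (simp add: D_def E_def sum.distrib sum_subtractf sum_divide_distrib[symmetric]
          sum_distrib_left algebra_simps diff_divide_distrib)
    finally show ?thesis
      by (simp add: ee_add)
  qed
  have "complex_of_real (cmod (\<Sum>x\<in>X. \<phi> a x) ^ (2 * n))
      = (\<Sum>gh\<in>P. ee (real_of_int (a * D gh) / real r) * ee (\<xi> * E gh))" for a
    unfolding norm_sum_power_eq_sum_tuples[OF assms(1)] P_def by (simp add: prod_\<phi> case_prod_beta)
  then have "complex_of_real (\<Sum>a\<in>{0..<int r}. cmod (\<Sum>x\<in>X. \<phi> a x) ^ (2 * n))
      = (\<Sum>a\<in>{0..<int r}. \<Sum>gh\<in>P. ee (real_of_int (a * D gh) / real r) * ee (\<xi> * E gh))"
    by (simp only: of_real_sum)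
  also have "\<dots> = (\<Sum>gh\<in>P. (\<Sum>a\<in>{0..<int r}. ee (real_of_int (a * D gh) / real r)) * ee (\<xi> * E gh))"
    by (simp add: sum.swap[of _ "{0..<int r}"] sum_distrib_right)
  also have "\<dots> = (\<Sum>gh\<in>P. (if int r dvd D gh then of_nat r else 0) * ee (\<xi> * E gh))"
    using assms(2) by (simp only: sum_ee_multiples)
  finally have "(\<Sum>a\<in>{0..<int r}. cmod (\<Sum>x\<in>X. \<phi> a x) ^ (2 * n))
      = cmod (\<Sum>gh\<in>P. (if int r dvd D gh then of_nat r else 0) * ee (\<xi> * E gh))"
    by (metis (no_types, lifting) abs_of_nonneg norm_of_real norm_ge_zero sum_nonneg zero_le_power)
  also have "\<dots> \<le> (\<Sum>gh\<in>P. if int r dvd D gh then real r else 0)"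
    by (rule order_trans[OF norm_sum], rule sum_mono) (simp add: norm_mult)
  also have "\<dots> = real r * real (card (congruent_pairs r n X))"
    using \<open>finite P\<close> by (simp add: sum.If_cases congruent_pairs_def P_def D_def Int_def case_prod_beta' mem_Times_iff)
  finally show ?thesis
    by (simp add: \<phi>_def)
qed

section \<open>Square roots modulo r and cancelling configurations\<close>

definition msqrts :: "nat \<Rightarrow> int \<Rightarrow> int set" where
  "msqrts r c = {k \<in> {0..<int r}. [k\<^sup>2 = c] (mod int r)}"

text \<open>The least square root serves as the reference root; it is junk if there is none.\<close>
definition msqrt :: "nat \<Rightarrow> int \<Rightarrow> int" where
  "msqrt r c = Min (msqrts r c)"

lemma finite_msqrts [simp]: "finite (msqrts r c)"
  by (rule finite_subset[of _ "{0..<int r}"]) (auto simp: msqrts_def)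

lemma msqrt_in_msqrts: "msqrts r c \<noteq> {} \<Longrightarrow> msqrt r c \<in> msqrts r c"
  by (simp add: msqrt_def)

lemma msqrts_dvd: "k \<in> msqrts r c \<Longrightarrow> int r dvd k\<^sup>2 - c"
  by (simp add: msqrts_def cong_iff_dvd_diff)

lemma msqrts_eq_if_cong:
  "k \<in> msqrts r c \<Longrightarrow> k' \<in> msqrts r c' \<Longrightarrow> int r dvd k - k' \<Longrightarrow> k = k'"
  by (simp add: msqrts_def mod_eq_dvd_iff[symmetric])

lemma msqrts_eq_or_dvd_add:
  assumes "prime r" "k \<in> msqrts r c" "k' \<in> msqrts r c"
  shows "k = k' \<or> int r dvd k + k'"
proof -
  have "int r dvd (k - k') * (k + k')"
    using dvd_diff[OF msqrts_dvd[OF assms(2)] msqrts_dvd[OF assms(3)]]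
    by (simp add: algebra_simps power2_eq_square)
  then have "int r dvd k - k' \<or> int r dvd k + k'"
    using assms(1) by (simp add: prime_dvd_mult_iff)
  then show ?thesis
    using msqrts_eq_if_cong[OF assms(2,3)] by blast
qed

lemma dvd_diff_sign_msqrt:
  assumes "prime r" "k \<in> msqrts r c"
  shows "int r dvd k - (if k = msqrt r c then 1 else -1) * msqrt r c"
proof -
  have "msqrt r c \<in> msqrts r c"
    using assms(2) msqrt_in_msqrts by blast
  then show ?thesis
    using msqrts_eq_or_dvd_add[OF _ assms(2)] assms(1) by auto
qed

lemma msqrts_eq_if_same_sign:
  assumes "prime r" "k \<in> msqrts r c" "k' \<in> msqrts r c"
    and "k = msqrt r c \<longleftrightarrow> k' = msqrt r c"
  shows "k = k'"
proof (cases "k = msqrt r c")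
  case False
  then have "int r dvd k + msqrt r c" "int r dvd k' + msqrt r c"
    using dvd_diff_sign_msqrt[OF assms(1,2)] dvd_diff_sign_msqrt[OF assms(1,3)] assms(4) by simp_all
  then have "int r dvd (k + msqrt r c) - (k' + msqrt r c)"
    by (rule dvd_diff)
  then show ?thesis
    using msqrts_eq_if_cong[OF assms(2,3)] by simp
qed (use assms(4) in simp)

definition net_coeff :: "nat \<Rightarrow> (nat \<Rightarrow> nat) \<Rightarrow> (nat \<Rightarrow> int) \<Rightarrow> (nat \<Rightarrow> nat) \<Rightarrow> (nat \<Rightarrow> int) \<Rightarrow> nat \<Rightarrow> int"
  where "net_coeff n wg \<sigma>g wh \<sigma>h y = (\<Sum>i | i < n \<and> wg i = y. \<sigma>g i) - (\<Sum>i | i < n \<and> wh i = y. \<sigma>h i)"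

lemma sum_group_by_value:
  fixes \<sigma> \<rho> :: "nat \<Rightarrow> int"
  assumes "finite Y" "w ` {..<n} \<subseteq> Y"
  shows "(\<Sum>i<n. \<sigma> i * \<rho> (w i)) = (\<Sum>y\<in>Y. (\<Sum>i | i < n \<and> w i = y. \<sigma> i) * \<rho> y)"
proof -
  have "(\<Sum>i<n. \<sigma> i * \<rho> (w i)) = (\<Sum>y\<in>Y. \<Sum>i \<in> {i \<in> {..<n}. w i = y}. \<sigma> i * \<rho> (w i))"
    by (rule sum.group[symmetric]) (use assms in auto)
  also have "\<dots> = (\<Sum>y\<in>Y. (\<Sum>i | i < n \<and> w i = y. \<sigma> i) * \<rho> y)"
    by (intro sum.cong refl) (auto simp: sum_distrib_right)
  finally show ?thesis .
qed

lemma abs_sum_signs_le_card: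
  assumes "\<forall>i\<in>A. \<sigma> i \<in> {1::int, -1}"
  shows "\<bar>\<Sum>i\<in>A. \<sigma> i\<bar> \<le> int (card A)"
proof -
  have "\<bar>\<Sum>i\<in>A. \<sigma> i\<bar> \<le> (\<Sum>i\<in>A. \<bar>\<sigma> i\<bar>)"
    by (rule sum_abs)
  also have "\<dots> = (\<Sum>i\<in>A. 1)"
    using assms by (intro sum.cong) auto
  finally show ?thesis
    by simp
qed

lemma abs_net_coeff_le:
  assumes "\<forall>i<n. \<sigma>g i \<in> {1, -1}" "\<forall>i<n. \<sigma>h i \<in> {1, -1}"
  shows "\<bar>net_coeff n wg \<sigma>g wh \<sigma>h y\<bar> \<le> 2 * int n"
proof -
  have card_le: "int (card {i. i < n \<and> w i = y}) \<le> int n" for w :: "nat \<Rightarrow> nat"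
    using card_mono[of "{..<n}" "{i. i < n \<and> w i = y}"] by auto
  have "\<bar>\<Sum>i | i < n \<and> wg i = y. \<sigma>g i\<bar> \<le> int n" "\<bar>\<Sum>i | i < n \<and> wh i = y. \<sigma>h i\<bar> \<le> int n"
    using assms abs_sum_signs_le_card card_le order_trans by (metis (mono_tags, lifting) mem_Collect_eq)+
  then show ?thesis
    unfolding net_coeff_def by linarith
qed

definition signed_root_solutions ::
    "nat \<Rightarrow> int \<Rightarrow> nat \<Rightarrow> (nat \<Rightarrow> nat) \<times> (nat \<Rightarrow> nat) \<Rightarrow> (nat \<Rightarrow> int) \<times> (nat \<Rightarrow> int) \<Rightarrow> int set"
  where "signed_root_solutions r j n w \<sigma> = {b \<in> {0..<int r}.
     (\<forall>i<n. msqrts r (j * (b - int (fst w i))) \<noteq> {}) \<and> (\<forall>i<n. msqrts r (j * (b - int (snd w i))) \<noteq> {}) \<and>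
     int r dvd (\<Sum>i<n. fst \<sigma> i * msqrt r (j * (b - int (fst w i))))
               - (\<Sum>i<n. snd \<sigma> i * msqrt r (j * (b - int (snd w i))))}"

lemma distinct_radicands_nth:
  assumes "prime r" "2 < r" "\<not> int r dvd j" "distinct ys" "\<forall>y\<in>set ys. y < r"
  shows "distinct_radicands (int r) j (\<lambda>l. int (ys ! l)) (length ys)"
proof
  show "prime (int r)" "2 < int r" "\<not> int r dvd j"
    using assms(1-3) by auto
  fix l l' assume l: "l < length ys" "l' < length ys" "l \<noteq> l'"
  then have "int (ys ! l) - int (ys ! l') \<noteq> 0"
    using assms(4) by (simp add: nth_eq_iff_index_eq)
  moreover have "ys ! l < r" "ys ! l' < r"
    using assms(5) l(1,2) by simp_all
  ultimately show "\<not> int r dvd int (ys ! l) - int (ys ! l')"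
    using dvd_imp_le_int[of "int (ys ! l) - int (ys ! l')" "int r"] by linarith
qed

text \<open>Grouping equal shifts turns the congruence into a linear form in the square roots
  of j (b - y) for distinct y, whose coefficients are nonzero and smaller than r.\<close>
lemma card_signed_root_solutions_nondegenerate:
  assumes "prime r" "2 * n + 2 < r" "\<not> int r dvd j"
    and "\<forall>i<n. 0 < wg i \<and> wg i < r" "\<forall>i<n. 0 < wh i \<and> wh i < r"
    and "\<forall>i<n. \<sigma>g i \<in> {1, -1}" "\<forall>i<n. \<sigma>h i \<in> {1, -1}"
    and "\<exists>y \<in> wg ` {..<n} \<union> wh ` {..<n}. net_coeff n wg \<sigma>g wh \<sigma>h y \<noteq> 0"
  shows "card (signed_root_solutions r j n (wg, wh) (\<sigma>g, \<sigma>h)) \<le> (\<Sum>m\<le>2*n. root_bound m 0)"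
proof -
  define e where "e = net_coeff n wg \<sigma>g wh \<sigma>h"
  define Y where "Y = wg ` {..<n} \<union> wh ` {..<n}"
  define ys where "ys = sorted_list_of_set {y \<in> Y. e y \<noteq> 0}"
  define m where "m = length ys"
  have "finite Y"
    by (simp add: Y_def)
  then have set_ys: "set ys = {y \<in> Y. e y \<noteq> 0}" and "distinct ys"
    by (simp_all add: ys_def)
  have m_card: "m = card {y \<in> Y. e y \<noteq> 0}"
    using \<open>distinct ys\<close> set_ys by (metis m_def distinct_card)
  have "{y \<in> Y. e y \<noteq> 0} \<noteq> {}"
    using assms(8) unfolding Y_def e_def by blast
  then have "0 < m"
    using \<open>finite Y\<close> by (simp add: m_card card_gt_0_iff)
  have "m \<le> 2 * n"
  proof -
    have "m \<le> card Y"
      unfolding m_card using \<open>finite Y\<close> by (intro card_mono) auto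
    also have "\<dots> \<le> card (wg ` {..<n}) + card (wh ` {..<n})"
      unfolding Y_def by (rule card_Un_le)
    also have "\<dots> \<le> 2 * n"
      using card_image_le[of "{..<n}" wg] card_image_le[of "{..<n}" wh] by simp
    finally show ?thesis .
  qed
  have ys_in: "ys ! l \<in> Y" "e (ys ! l) \<noteq> 0" if "l < m" for l
    using that set_ys nth_mem[of l ys] by (auto simp: m_def)
  have "distinct_radicands (int r) j (\<lambda>l. int (ys ! l)) m"
    unfolding m_def using assms(1-5) \<open>distinct ys\<close>
    by (intro distinct_radicands_nth) (auto simp: set_ys Y_def)
  then interpret distinct_radicands "int r" j "\<lambda>l. int (ys ! l)" m .
  have e_not_dvd: "\<not> int r dvd e (ys ! l)" if "l < m" for l
  proof
    assume "int r dvd e (ys ! l)"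
    then have "\<bar>int r\<bar> \<le> \<bar>e (ys ! l)\<bar>"
      by (rule dvd_imp_le_int[OF ys_in(2)[OF that]])
    then show False
      using abs_net_coeff_le[OF assms(6,7), of wg wh "ys ! l"] assms(2) by (simp add: e_def)
  qed
  define K where "K = {x \<in> {0..<int r}. \<exists>s. (\<forall>l<m. int r dvd s l ^ 2 - j * (x - int (ys ! l))) \<and>
      int r dvd (\<Sum>l<m. e (ys ! l) * s l)}"
  have "card K \<le> root_bound m 0"
    unfolding K_def by (rule card_roots_linear_form[OF \<open>0 < m\<close>]) (use e_not_dvd in blast)
  moreover have subset: "signed_root_solutions r j n (wg, wh) (\<sigma>g, \<sigma>h) \<subseteq> K"
  proof
    fix b assume b: "b \<in> signed_root_solutions r j n (wg, wh) (\<sigma>g, \<sigma>h)"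
    define \<rho> where "\<rho> y = msqrt r (j * (b - int y))" for y
    have "msqrts r (j * (b - int y)) \<noteq> {}" if "y \<in> Y" for y
      using b that by (auto simp: signed_root_solutions_def Y_def)
    then have roots: "\<forall>l<m. int r dvd \<rho> (ys ! l) ^ 2 - j * (b - int (ys ! l))"
      using ys_in(1) msqrt_in_msqrts msqrts_dvd by (simp add: \<rho>_def)
    have "(\<Sum>l<m. e (ys ! l) * \<rho> (ys ! l)) = (\<Sum>y \<in> {y \<in> Y. e y \<noteq> 0}. e y * \<rho> y)"
      using bij_betw_nth[OF \<open>distinct ys\<close>, of "{..<m}" "{y \<in> Y. e y \<noteq> 0}"] set_ys
      by (simp add: m_def sum.reindex_bij_betw[where g = "\<lambda>y. e y * \<rho> y"])
    also have "\<dots> = (\<Sum>y\<in>Y. e y * \<rho> y)"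
      by (rule sum.mono_neutral_left) (auto simp: \<open>finite Y\<close>)
    also have "\<dots> = (\<Sum>i<n. \<sigma>g i * \<rho> (wg i)) - (\<Sum>i<n. \<sigma>h i * \<rho> (wh i))"
      using sum_group_by_value[OF \<open>finite Y\<close>, of wg n \<sigma>g \<rho>]
        sum_group_by_value[OF \<open>finite Y\<close>, of wh n \<sigma>h \<rho>]
      by (auto simp: Y_def e_def net_coeff_def algebra_simps sum_subtractf)
    finally have "int r dvd (\<Sum>l<m. e (ys ! l) * \<rho> (ys ! l))"
      using b by (simp add: signed_root_solutions_def \<rho>_def)
    with roots b show "b \<in> K"
      by (auto simp: signed_root_solutions_def K_def)
  qed
  moreover have "finite K"
    unfolding K_def by (rule finite_subset[of _ "{0..<int r}"]) auto
  ultimately have "card (signed_root_solutions r j n (wg, wh) (\<sigma>g, \<sigma>h)) \<le> root_bound m 0"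
    using card_mono[OF _ subset] by fastforce
  also have "\<dots> \<le> (\<Sum>m\<le>2*n. root_bound m 0)"
    using \<open>m \<le> 2 * n\<close> by (intro member_le_sum) auto
  finally show ?thesis .
qed

text \<open>If all net coefficients vanish, every value occurs at least twice among the 2 n entries.\<close>
lemma card_values_le_if_net_coeff_eq_0:
  assumes "\<forall>i<n. \<sigma>g i \<in> {1, -1}" "\<forall>i<n. \<sigma>h i \<in> {1, -1}"
    and "\<forall>y \<in> wg ` {..<n} \<union> wh ` {..<n}. net_coeff n wg \<sigma>g wh \<sigma>h y = 0"
  shows "card (wg ` {..<n} \<union> wh ` {..<n}) \<le> n"
proof -
  define Y where "Y = wg ` {..<n} \<union> wh ` {..<n}"
  define cg where "cg y = card {i. i < n \<and> wg i = y}" for y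
  define ch where "ch y = card {i. i < n \<and> wh i = y}" for y
  have "finite Y"
    by (simp add: Y_def)
  have fibres: "(\<Sum>y\<in>Y. card {i. i < n \<and> w i = y}) = n" if "w ` {..<n} \<subseteq> Y" for w
  proof -
    have "(\<Sum>y\<in>Y. card {i. i < n \<and> w i = y}) = (\<Sum>y\<in>Y. \<Sum>i \<in> {i \<in> {..<n}. w i = y}. 1::nat)"
      by simp
    also have "\<dots> = (\<Sum>i<n. 1)"
      by (rule sum.group) (use that \<open>finite Y\<close> in auto)
    finally show ?thesis
      by simp
  qed
  have single: False if "y \<in> Y" "{i. i < n \<and> w i = y} = {i0}" "{i. i < n \<and> w' i = y} = {}"
      "net_coeff n wg \<sigma>g wh \<sigma>h y = \<sigma> i0 \<or> net_coeff n wg \<sigma>g wh \<sigma>h y = - \<sigma> i0"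
      "\<forall>i<n. \<sigma> i \<in> {1, -1}" for y i0 w w' \<sigma>
  proof -
    have "i0 < n"
      using that(2) by blast
    then have "\<sigma> i0 \<noteq> 0"
      using that(5) by auto
    then show False
      using that(1,4) assms(3) by (auto simp: Y_def)
  qed
  have "2 \<le> cg y + ch y" if y: "y \<in> Y" for y
  proof (rule ccontr)
    assume "\<not> 2 \<le> cg y + ch y"
    moreover obtain i where "i < n" "wg i = y \<or> wh i = y"
      using y by (auto simp: Y_def)
    then have "cg y \<noteq> 0 \<or> ch y \<noteq> 0"
      unfolding cg_def ch_def by (auto simp: card_eq_0_iff)
    ultimately consider "cg y = 1" "ch y = 0" | "cg y = 0" "ch y = 1"
      by linarith
    then show False
    proof cases
      case 1
      then obtain i0 where g: "{i. i < n \<and> wg i = y} = {i0}" and h: "{i. i < n \<and> wh i = y} = {}"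
        by (auto simp: cg_def ch_def card_1_singleton_iff card_eq_0_iff)
      have "net_coeff n wg \<sigma>g wh \<sigma>h y = \<sigma>g i0"
        unfolding net_coeff_def g h by simp
      then show False
        using single[OF y g h, where \<sigma> = \<sigma>g] assms(1) by simp
    next
      case 2
      then obtain i0 where h: "{i. i < n \<and> wh i = y} = {i0}" and g: "{i. i < n \<and> wg i = y} = {}"
        by (auto simp: cg_def ch_def card_1_singleton_iff card_eq_0_iff)
      have "net_coeff n wg \<sigma>g wh \<sigma>h y = - \<sigma>h i0"
        unfolding net_coeff_def g h by simp
      then show False
        using single[OF y h g, where \<sigma> = \<sigma>h] assms(2) by simp
    qed
  qed
  then have "2 * card Y \<le> (\<Sum>y\<in>Y. cg y + ch y)"
    using sum_mono[of Y "\<lambda>_. 2" "\<lambda>y. cg y + ch y"] by simp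
  also have "\<dots> = 2 * n"
    using fibres[of wg] fibres[of wh] by (simp add: sum.distrib cg_def ch_def Y_def)
  finally show ?thesis
    by (simp add: Y_def)
qed

section \<open>Counting the solutions\<close>

definition root_pairs :: "nat \<Rightarrow> int \<Rightarrow> nat set \<Rightarrow> int \<Rightarrow> (nat \<times> int) set" where
  "root_pairs r j Vt b = Sigma Vt (\<lambda>v. msqrts r (j * (b - int v)))"

definition tuple_shifts :: "nat \<Rightarrow> (nat \<Rightarrow> nat \<times> int) \<Rightarrow> nat \<Rightarrow> nat" where
  "tuple_shifts n u = (\<lambda>i\<in>{..<n}. fst (u i))"

definition tuple_signs :: "nat \<Rightarrow> int \<Rightarrow> int \<Rightarrow> nat \<Rightarrow> (nat \<Rightarrow> nat \<times> int) \<Rightarrow> nat \<Rightarrow> int" where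
  "tuple_signs r j b n u =
     (\<lambda>i\<in>{..<n}. if snd (u i) = msqrt r (j * (b - int (fst (u i)))) then 1 else -1)"

lemma mem_root_pairs_iff:
  "x \<in> root_pairs r j Vt b \<longleftrightarrow> fst x \<in> Vt \<and> snd x \<in> msqrts r (j * (b - int (fst x)))"
  by (cases x) (simp add: root_pairs_def)

lemma inner_sum_eq_sum_root_pairs:
  assumes "finite Vt"
  shows "inner_sum r j Vt \<xi> a b =
    (\<Sum>x\<in>root_pairs r j Vt b. ee (real_of_int (a * snd x) / real r + \<xi> * real (fst x)))"
proof -
  have "inner_sum r j Vt \<xi> a b =
      (\<Sum>v\<in>Vt. \<Sum>k\<in>msqrts r (j * (b - int v)). ee (real_of_int (a * k) / real r + \<xi> * real v))"
    unfolding inner_sum_def msqrts_def ee_r_def by (simp add: ee_add)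
  also have "\<dots> = (\<Sum>(v, k)\<in>root_pairs r j Vt b. ee (real_of_int (a * k) / real r + \<xi> * real v))"
    unfolding root_pairs_def by (rule sum.Sigma) (simp_all add: assms)
  finally show ?thesis
    by (simp add: case_prod_beta)
qed

lemma inj_on_shifts_signs:
  assumes "prime r"
  shows "inj_on (\<lambda>u. (tuple_shifts n u, tuple_signs r j b n u)) ({..<n} \<rightarrow>\<^sub>E root_pairs r j Vt b)"
proof (rule inj_onI)
  fix u u' assume u: "u \<in> {..<n} \<rightarrow>\<^sub>E root_pairs r j Vt b" and u': "u' \<in> {..<n} \<rightarrow>\<^sub>E root_pairs r j Vt b"
    and eq: "(tuple_shifts n u, tuple_signs r j b n u) = (tuple_shifts n u', tuple_signs r j b n u')"
  show "u = u'"
  proof (rule PiE_ext[OF u u'])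
    fix i assume i: "i \<in> {..<n}"
    have fst_eq: "fst (u i) = fst (u' i)"
      using fun_cong[of _ _ i, OF arg_cong[OF eq, of fst]] i by (simp add: tuple_shifts_def)
    have "snd (u i) \<in> msqrts r (j * (b - int (fst (u i))))"
      "snd (u' i) \<in> msqrts r (j * (b - int (fst (u i))))"
      using PiE_mem[OF u i] PiE_mem[OF u' i] fst_eq by (simp_all add: mem_root_pairs_iff)
    moreover have "snd (u i) = msqrt r (j * (b - int (fst (u i)))) \<longleftrightarrow>
        snd (u' i) = msqrt r (j * (b - int (fst (u i))))"
      using fun_cong[of _ _ i, OF arg_cong[OF eq, of snd]] i fst_eq
      by (simp add: tuple_signs_def split: if_splits)
    ultimately have "snd (u i) = snd (u' i)"
      using msqrts_eq_if_same_sign[OF assms] by blast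
    with fst_eq show "u i = u' i"
      by (simp add: prod_eq_iff)
  qed
qed

lemma congruent_pair_imp_signed_root_solution:
  assumes "prime r" "b \<in> {0..<int r}" "(g, h) \<in> congruent_pairs r n (root_pairs r j Vt b)"
  shows "b \<in> signed_root_solutions r j n (tuple_shifts n g, tuple_shifts n h)
    (tuple_signs r j b n g, tuple_signs r j b n h)"
proof -
  have g: "g \<in> {..<n} \<rightarrow>\<^sub>E root_pairs r j Vt b" and h: "h \<in> {..<n} \<rightarrow>\<^sub>E root_pairs r j Vt b"
    and congruent: "int r dvd (\<Sum>i<n. snd (g i)) - (\<Sum>i<n. snd (h i))"
    using assms(3) by (auto simp: congruent_pairs_def)
  have root: "snd (u i) \<in> msqrts r (j * (b - int (fst (u i))))"
    if "u \<in> {..<n} \<rightarrow>\<^sub>E root_pairs r j Vt b" "i < n" for u i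
    using PiE_mem[OF that(1)] that(2) by (simp add: mem_root_pairs_iff)
  have sign: "int r dvd (\<Sum>i<n. snd (u i)) - (\<Sum>i<n. tuple_signs r j b n u i *
      msqrt r (j * (b - int (tuple_shifts n u i))))"
    if "u \<in> {..<n} \<rightarrow>\<^sub>E root_pairs r j Vt b" for u
    unfolding sum_subtractf[symmetric]
    using dvd_diff_sign_msqrt[OF assms(1) root[OF that]]
    by (intro dvd_sum) (simp add: tuple_signs_def tuple_shifts_def)
  have "int r dvd ((\<Sum>i<n. snd (g i)) - (\<Sum>i<n. snd (h i)))
      - ((\<Sum>i<n. snd (g i)) - (\<Sum>i<n. tuple_signs r j b n g i * msqrt r (j * (b - int (tuple_shifts n g i)))))
      + ((\<Sum>i<n. snd (h i)) - (\<Sum>i<n. tuple_signs r j b n h i * msqrt r (j * (b - int (tuple_shifts n h i)))))"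
    by (rule dvd_add[OF dvd_diff[OF congruent sign[OF g]] sign[OF h]])
  then show ?thesis
    using assms(2) root[OF g] root[OF h]
    by (auto simp: signed_root_solutions_def tuple_shifts_def)
qed

definition sign_patterns :: "nat \<Rightarrow> ((nat \<Rightarrow> int) \<times> (nat \<Rightarrow> int)) set" where
  "sign_patterns n = ({..<n} \<rightarrow>\<^sub>E {1, -1}) \<times> ({..<n} \<rightarrow>\<^sub>E {1, -1})"

lemma card_sign_patterns: "card (sign_patterns n) = 4 ^ n"
proof -
  have "card {1::int, -1} = 2"
    by simp
  then have "card (sign_patterns n) = 2 ^ n * 2 ^ n"
    by (simp add: sign_patterns_def card_PiE card_cartesian_product numeral_2_eq_2)
  also have "\<dots> = 4 ^ n"
    by (simp flip: power_mult_distrib)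
  finally show ?thesis .
qed

lemma card_congruent_pairs_le_card_patterns:
  assumes "prime r" "b \<in> {0..<int r}" "finite Vt"
  shows "card (congruent_pairs r n (root_pairs r j Vt b)) \<le>
    card {(w, \<sigma>) \<in> (({..<n} \<rightarrow>\<^sub>E Vt) \<times> ({..<n} \<rightarrow>\<^sub>E Vt)) \<times> sign_patterns n.
      b \<in> signed_root_solutions r j n w \<sigma>}"
proof (rule card_inj_on_le)
  let ?P = "{..<n} \<rightarrow>\<^sub>E root_pairs r j Vt b"
  let ?enc = "\<lambda>(g, h). ((tuple_shifts n g, tuple_shifts n h), (tuple_signs r j b n g, tuple_signs r j b n h))"
  have in_P: "g \<in> ?P" "h \<in> ?P" if "(g, h) \<in> congruent_pairs r n (root_pairs r j Vt b)" for g h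
    using that by (simp_all add: congruent_pairs_def)
  note inj = inj_onD[OF inj_on_shifts_signs[OF assms(1), of n j b Vt]]
  show "inj_on ?enc (congruent_pairs r n (root_pairs r j Vt b))"
  proof (rule inj_onI)
    fix x x' assume x: "x \<in> congruent_pairs r n (root_pairs r j Vt b)"
      and x': "x' \<in> congruent_pairs r n (root_pairs r j Vt b)" and eq: "?enc x = ?enc x'"
    obtain g h g' h' where xs: "x = (g, h)" "x' = (g', h')"
      by (cases x, cases x')
    have "g = g'"
      by (rule inj) (use eq in_P[OF x[unfolded xs(1)]] in_P[OF x'[unfolded xs(2)]] in \<open>simp_all add: xs\<close>)
    moreover have "h = h'"
      by (rule inj) (use eq in_P[OF x[unfolded xs(1)]] in_P[OF x'[unfolded xs(2)]] in \<open>simp_all add: xs\<close>)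
    ultimately show "x = x'"
      by (simp add: xs)
  qed
  have encodings: "tuple_shifts n u \<in> {..<n} \<rightarrow>\<^sub>E Vt" "tuple_signs r j b n u \<in> {..<n} \<rightarrow>\<^sub>E {1, -1}"
    if "u \<in> ?P" for u
    using PiE_mem[OF that] unfolding tuple_shifts_def tuple_signs_def restrict_PiE_iff
    by (simp_all add: mem_root_pairs_iff)
  show "?enc ` congruent_pairs r n (root_pairs r j Vt b) \<subseteq>
      {(w, \<sigma>) \<in> (({..<n} \<rightarrow>\<^sub>E Vt) \<times> ({..<n} \<rightarrow>\<^sub>E Vt)) \<times> sign_patterns n.
        b \<in> signed_root_solutions r j n w \<sigma>}"
  proof
    fix z assume "z \<in> ?enc ` congruent_pairs r n (root_pairs r j Vt b)"
    then obtain g h where gh: "(g, h) \<in> congruent_pairs r n (root_pairs r j Vt b)" and z: "z = ?enc (g, h)"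
      by auto
    show "z \<in> {(w, \<sigma>) \<in> (({..<n} \<rightarrow>\<^sub>E Vt) \<times> ({..<n} \<rightarrow>\<^sub>E Vt)) \<times> sign_patterns n.
        b \<in> signed_root_solutions r j n w \<sigma>}"
      using congruent_pair_imp_signed_root_solution[OF assms(1,2) gh]
        encodings[OF in_P(1)[OF gh]] encodings[OF in_P(2)[OF gh]]
      by (simp add: z sign_patterns_def)
  qed
  show "finite {(w, \<sigma>) \<in> (({..<n} \<rightarrow>\<^sub>E Vt) \<times> ({..<n} \<rightarrow>\<^sub>E Vt)) \<times> sign_patterns n.
      b \<in> signed_root_solutions r j n w \<sigma>}"
    by (rule finite_subset[of _ "(({..<n} \<rightarrow>\<^sub>E Vt) \<times> ({..<n} \<rightarrow>\<^sub>E Vt)) \<times> sign_patterns n"])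
      (auto simp: sign_patterns_def finite_PiE assms(3))
qed

lemma sum_card_filter_swap:
  assumes "finite A" "finite B"
  shows "(\<Sum>a\<in>A. card {b \<in> B. P a b}) = (\<Sum>b\<in>B. card {a \<in> A. P a b})"
proof -
  have "(\<Sum>a\<in>A. card {b \<in> B. P a b}) = (\<Sum>a\<in>A. \<Sum>b\<in>B. if P a b then 1 else 0)"
    using assms by (simp add: sum.If_cases Int_def)
  also have "\<dots> = (\<Sum>b\<in>B. \<Sum>a\<in>A. if P a b then 1 else 0)"
    by (rule sum.swap)
  also have "\<dots> = (\<Sum>b\<in>B. card {a \<in> A. P a b})"
    using assms by (simp add: sum.If_cases Int_def)
  finally show ?thesis .
qed

lemma card_signed_root_solutions:
  assumes "prime r" "\<not> int r dvd j"
    and "\<forall>i<n. 0 < fst w i \<and> fst w i < r" "\<forall>i<n. 0 < snd w i \<and> snd w i < r"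
    and "\<sigma> \<in> sign_patterns n"
  shows "card (signed_root_solutions r j n w \<sigma>) \<le> (\<Sum>m\<le>2*n. root_bound m 0) + (2 * n + 2) +
    (if card (fst w ` {..<n} \<union> snd w ` {..<n}) \<le> n then r else 0)"
proof -
  obtain wg wh \<sigma>g \<sigma>h where w: "w = (wg, wh)" and \<sigma>: "\<sigma> = (\<sigma>g, \<sigma>h)"
    by (cases w, cases \<sigma>)
  have signs: "\<forall>i<n. \<sigma>g i \<in> {1, -1}" "\<forall>i<n. \<sigma>h i \<in> {1, -1}"
    using assms(5) by (auto simp: \<sigma> sign_patterns_def dest: PiE_mem)
  have "card (signed_root_solutions r j n w \<sigma>) \<le> card {0..<int r}"
    by (rule card_mono) (auto simp: signed_root_solutions_def)
  then have le_r: "card (signed_root_solutions r j n w \<sigma>) \<le> r"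
    by simp
  consider "r \<le> 2 * n + 2"
    | "2 * n + 2 < r" "\<exists>y \<in> wg ` {..<n} \<union> wh ` {..<n}. net_coeff n wg \<sigma>g wh \<sigma>h y \<noteq> 0"
    | "\<forall>y \<in> wg ` {..<n} \<union> wh ` {..<n}. net_coeff n wg \<sigma>g wh \<sigma>h y = 0"
    by force
  then show ?thesis
  proof cases
    case 2
    then show ?thesis
      using card_signed_root_solutions_nondegenerate[OF assms(1) 2(1) assms(2) _ _ signs 2(2)] assms(3,4)
      by (simp add: w \<sigma>)
  next
    case 3
    then show ?thesis
      using card_values_le_if_net_coeff_eq_0[OF signs 3] le_r by (simp add: w)
  qed (use le_r in linarith)
qed

lemma card_subsets_card_le:
  assumes "finite A"
  shows "card {Z. Z \<subseteq> A \<and> card Z \<le> n} \<le> (n + 1) * max 1 (card A) ^ n"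
proof -
  have "{Z. Z \<subseteq> A \<and> card Z \<le> n} = (\<Union>i\<in>{..n}. {Z. Z \<subseteq> A \<and> card Z = i})"
    by auto
  then have "card {Z. Z \<subseteq> A \<and> card Z \<le> n} \<le> (\<Sum>i\<le>n. card {Z. Z \<subseteq> A \<and> card Z = i})"
    by (simp add: card_UN_le)
  also have "\<dots> = (\<Sum>i\<le>n. card A choose i)"
    by (simp add: n_subsets[OF assms])
  also have "\<dots> \<le> (\<Sum>i\<le>n. max 1 (card A) ^ n)"
  proof (rule sum_mono)
    fix i assume "i \<in> {..n}"
    have "card A choose i \<le> card A ^ i"
      by (cases "i \<le> card A") (simp_all add: binomial_le_pow binomial_eq_0)
    also have "\<dots> \<le> max 1 (card A) ^ i"
      by (rule power_mono) simp_all
    also have "\<dots> \<le> max 1 (card A) ^ n"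
      using \<open>i \<in> {..n}\<close> by (intro power_increasing) simp_all
    finally show "card A choose i \<le> max 1 (card A) ^ n" .
  qed
  finally show ?thesis
    by simp
qed

lemma card_pairs_few_values:
  assumes "finite Vt"
  shows "card {w \<in> ({..<n} \<rightarrow>\<^sub>E Vt) \<times> ({..<n} \<rightarrow>\<^sub>E Vt). card (fst w ` {..<n} \<union> snd w ` {..<n}) \<le> n}
     \<le> (n + 1) * max 1 (card Vt) ^ n * n ^ (2 * n)"
proof -
  define ZZ where "ZZ = {Z. Z \<subseteq> Vt \<and> card Z \<le> n}"
  define M where "M = max 1 (card Vt)"
  have "finite ZZ"
    using assms by (simp add: ZZ_def)
  have "{w \<in> ({..<n} \<rightarrow>\<^sub>E Vt) \<times> ({..<n} \<rightarrow>\<^sub>E Vt). card (fst w ` {..<n} \<union> snd w ` {..<n}) \<le> n}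
      \<subseteq> (\<Union>Z\<in>ZZ. ({..<n} \<rightarrow>\<^sub>E Z) \<times> ({..<n} \<rightarrow>\<^sub>E Z))"
  proof clarify
    fix wg wh assume w: "wg \<in> {..<n} \<rightarrow>\<^sub>E Vt" "wh \<in> {..<n} \<rightarrow>\<^sub>E Vt"
      and few: "card (fst (wg, wh) ` {..<n} \<union> snd (wg, wh) ` {..<n}) \<le> n"
    define Z where "Z = wg ` {..<n} \<union> wh ` {..<n}"
    have "Z \<in> ZZ"
      using w few by (auto simp: Z_def ZZ_def dest: PiE_mem)
    moreover have "wg \<in> {..<n} \<rightarrow>\<^sub>E Z" "wh \<in> {..<n} \<rightarrow>\<^sub>E Z"
      using w unfolding PiE_iff Z_def by blast+
    ultimately show "(wg, wh) \<in> (\<Union>Z\<in>ZZ. ({..<n} \<rightarrow>\<^sub>E Z) \<times> ({..<n} \<rightarrow>\<^sub>E Z))"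
      by blast
  qed
  then have "card {w \<in> ({..<n} \<rightarrow>\<^sub>E Vt) \<times> ({..<n} \<rightarrow>\<^sub>E Vt). card (fst w ` {..<n} \<union> snd w ` {..<n}) \<le> n}
      \<le> card (\<Union>Z\<in>ZZ. ({..<n} \<rightarrow>\<^sub>E Z) \<times> ({..<n} \<rightarrow>\<^sub>E Z))"
    using \<open>finite ZZ\<close> assms
    by (intro card_mono) (auto simp: ZZ_def intro!: finite_PiE finite_subset[OF _ assms])
  also have "\<dots> \<le> (\<Sum>Z\<in>ZZ. card (({..<n} \<rightarrow>\<^sub>E Z) \<times> ({..<n} \<rightarrow>\<^sub>E Z)))"
    by (rule card_UN_le[OF \<open>finite ZZ\<close>])
  also have "\<dots> \<le> (\<Sum>Z\<in>ZZ. n ^ (2 * n))"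
  proof (rule sum_mono)
    fix Z assume "Z \<in> ZZ"
    then have "card Z ^ n * card Z ^ n \<le> n ^ n * n ^ n"
      by (intro mult_le_mono power_mono) (auto simp: ZZ_def)
    then show "card (({..<n} \<rightarrow>\<^sub>E Z) \<times> ({..<n} \<rightarrow>\<^sub>E Z)) \<le> n ^ (2 * n)"
      by (simp add: card_PiE card_cartesian_product power_add[symmetric] mult_2)
  qed
  also have "\<dots> = card ZZ * n ^ (2 * n)"
    by simp
  also have "card ZZ \<le> (n + 1) * M ^ n"
    unfolding ZZ_def M_def by (rule card_subsets_card_le[OF assms])
  then have "card ZZ * n ^ (2 * n) \<le> (n + 1) * M ^ n * n ^ (2 * n)"
    by simp
  finally show ?thesis
    by (simp only: M_def)
qed


lemma sum_card_congruent_pairs_le: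
  assumes "prime r" "\<not> int r dvd j" "finite Vt" "\<forall>v\<in>Vt. 0 < v \<and> v < r"
  shows "(\<Sum>b\<in>{0..<int r}. card (congruent_pairs r n (root_pairs r j Vt b)))
    \<le> 4 ^ n * (card Vt ^ (2 * n) * ((\<Sum>m\<le>2*n. root_bound m 0) + (2 * n + 2))
               + r * ((n + 1) * max 1 (card Vt) ^ n * n ^ (2 * n)))"
proof -
  define W where "W = ({..<n} \<rightarrow>\<^sub>E Vt) \<times> ({..<n} \<rightarrow>\<^sub>E Vt)"
  define D where "D = (\<Sum>m\<le>2*n. root_bound m 0) + (2 * n + 2)"
  define Few where "Few = {w \<in> W. card (fst w ` {..<n} \<union> snd w ` {..<n}) \<le> n}"
  define P where "P = W \<times> sign_patterns n"
  have "finite P"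
    using assms(3) by (simp add: P_def W_def sign_patterns_def finite_PiE)
  have "(\<Sum>b\<in>{0..<int r}. card (congruent_pairs r n (root_pairs r j Vt b)))
      \<le> (\<Sum>b\<in>{0..<int r}. card {(w, \<sigma>) \<in> P. b \<in> signed_root_solutions r j n w \<sigma>})"
    unfolding P_def W_def
    by (intro sum_mono card_congruent_pairs_le_card_patterns[OF assms(1) _ assms(3)]) simp
  also have "\<dots> = (\<Sum>(w, \<sigma>) \<in> P. card {b \<in> {0..<int r}. b \<in> signed_root_solutions r j n w \<sigma>})"
    using sum_card_filter_swap[OF finite_atLeastLessThan_int \<open>finite P\<close>,
        of "\<lambda>b x. case x of (w, \<sigma>) \<Rightarrow> b \<in> signed_root_solutions r j n w \<sigma>" 0 "int r"]
    by (simp add: case_prod_unfold)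
  also have "\<dots> = (\<Sum>(w, \<sigma>) \<in> P. card (signed_root_solutions r j n w \<sigma>))"
    by (intro sum.cong refl) (auto simp: signed_root_solutions_def intro!: arg_cong[where f = card])
  also have "\<dots> \<le> (\<Sum>(w, \<sigma>) \<in> P. D + (if w \<in> Few then r else 0))"
  proof (rule sum_mono, clarify)
    fix w \<sigma> assume x: "(w, \<sigma>) \<in> P"
    then have "\<forall>i<n. 0 < fst w i \<and> fst w i < r" "\<forall>i<n. 0 < snd w i \<and> snd w i < r"
      using assms(4) by (auto simp: P_def W_def dest!: PiE_mem)
    then show "card (signed_root_solutions r j n w \<sigma>) \<le> D + (if w \<in> Few then r else 0)"
      using card_signed_root_solutions[OF assms(1,2), of n w \<sigma>] x
      by (auto simp: D_def Few_def P_def)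
  qed
  also have "\<dots> = card P * D + r * card (Few \<times> sign_patterns n)"
  proof -
    have "P \<inter> {x. fst x \<in> Few} = Few \<times> sign_patterns n"
      by (auto simp: Few_def P_def)
    then show ?thesis
      using \<open>finite P\<close> by (simp add: case_prod_unfold sum.distrib sum.If_cases)
  qed
  also have "\<dots> = 4 ^ n * (card Vt ^ (2 * n) * D + r * card Few)"
  proof -
    have "card W = card Vt ^ (2 * n)"
      by (simp add: W_def card_cartesian_product card_PiE power_add[symmetric] mult_2)
    then show ?thesis
      by (simp add: P_def card_cartesian_product card_sign_patterns algebra_simps)
  qed
  also have "card Few \<le> (n + 1) * max 1 (card Vt) ^ n * n ^ (2 * n)"
    using card_pairs_few_values[OF assms(3), of n] by (simp add: Few_def W_def)
  finally show ?thesis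
    by (simp add: D_def mult_left_mono)
qed

lemma finite_card_le_if_subset_dyadic:
  fixes V :: real
  assumes "1 \<le> V" "Vt \<subseteq> {v. V / 2 < real v \<and> real v \<le> V}"
  shows "finite Vt" "real (card Vt) \<le> V"
proof -
  have "Vt \<subseteq> {1..nat \<lfloor>V\<rfloor>}"
  proof
    fix v assume "v \<in> Vt"
    then have "V / 2 < real v" "real v \<le> V"
      using assms(2) by auto
    then show "v \<in> {1..nat \<lfloor>V\<rfloor>}"
      using assms(1) by (auto simp: le_nat_floor)
  qed
  then show "finite Vt"
    using finite_subset by blast
  have "card Vt \<le> nat \<lfloor>V\<rfloor>"
    using card_mono[OF _ \<open>Vt \<subseteq> {1..nat \<lfloor>V\<rfloor>}\<close>] by simp
  then show "real (card Vt) \<le> V"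
    using assms(1) by linarith
qed

lemma count_bound_le:
  fixes V :: real
  assumes "1 \<le> V" "real c \<le> V"
  shows "real (4 ^ n * (c ^ (2 * n) * D + r * ((n + 1) * max 1 c ^ n * n ^ (2 * n))))
    \<le> real (4 ^ n * (D + (n + 1) * n ^ (2 * n))) * (V ^ (2 * n) + real r * V ^ n)"
proof -
  define N where "N = (n + 1) * n ^ (2 * n)"
  have "real c ^ (2 * n) \<le> V ^ (2 * n)" "real (max 1 c) ^ n \<le> V ^ n"
    using assms by (auto intro!: power_mono)
  then have "real c ^ (2 * n) * real D + real r * real (max 1 c) ^ n * real N
      \<le> V ^ (2 * n) * real D + real r * V ^ n * real N"
    by (intro add_mono mult_right_mono mult_left_mono) simp_all
  also have "\<dots> \<le> (real D + real N) * (V ^ (2 * n) + real r * V ^ n)"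
    using assms(1) by (simp add: algebra_simps)
  finally have key: "real c ^ (2 * n) * real D + real r * real (max 1 c) ^ n * real N
      \<le> (real D + real N) * (V ^ (2 * n) + real r * V ^ n)" .
  have "real (4 ^ n * (c ^ (2 * n) * D + r * ((n + 1) * max 1 c ^ n * n ^ (2 * n))))
      = 4 ^ n * (real c ^ (2 * n) * real D + real r * real (max 1 c) ^ n * real N)"
    by (simp add: N_def algebra_simps)
  also have "\<dots> \<le> 4 ^ n * ((real D + real N) * (V ^ (2 * n) + real r * V ^ n))"
    using key by (rule mult_left_mono) simp
  also have "\<dots> = real (4 ^ n * (D + (n + 1) * n ^ (2 * n))) * (V ^ (2 * n) + real r * V ^ n)"
    by (simp add: N_def algebra_simps)
  finally show ?thesis .
qed

lemma sum_moment_inner_sum_le: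
  assumes r: "prime r" "coprime j (int r)" and V: "1 \<le> V" "V < real r"
    and Vt: "Vt \<subseteq> {v. V / 2 < real v \<and> real v \<le> V}"
  shows "(\<Sum>a\<in>{0..<int r}. \<Sum>b\<in>{0..<int r}. cmod (inner_sum r j Vt \<xi> a b) ^ (2 * n))
    \<le> real (4 ^ n * ((\<Sum>m\<le>2*n. root_bound m 0) + (2 * n + 2) + (n + 1) * n ^ (2 * n)))
        * (V ^ (2 * n) + real r * V ^ n) * real r"
proof -
  define D where "D = (\<Sum>m\<le>2*n. root_bound m 0) + (2 * n + 2)"
  have "finite Vt" "real (card Vt) \<le> V"
    using finite_card_le_if_subset_dyadic[OF V(1) Vt] by blast+
  have "\<forall>v\<in>Vt. 0 < v \<and> v < r"
    using V Vt by force
  have "\<not> int r dvd j"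
  proof
    assume "int r dvd j"
    then have "is_unit (int r)"
      using r(2) by (meson coprime_common_divisor dvd_refl)
    then show False
      using r(1) by simp
  qed
  have "(\<Sum>a\<in>{0..<int r}. \<Sum>b\<in>{0..<int r}. cmod (inner_sum r j Vt \<xi> a b) ^ (2 * n))
      = (\<Sum>b\<in>{0..<int r}. \<Sum>a\<in>{0..<int r}. cmod (inner_sum r j Vt \<xi> a b) ^ (2 * n))"
    by (rule sum.swap)
  also have "\<dots> \<le> (\<Sum>b\<in>{0..<int r}. real r * real (card (congruent_pairs r n (root_pairs r j Vt b))))"
    using moment_le_card_congruent_pairs[of "root_pairs r j Vt _" r]
    by (intro sum_mono) (simp add: inner_sum_eq_sum_root_pairs \<open>finite Vt\<close> root_pairs_def prime_gt_0_nat r(1))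
  also have "\<dots> = real r * real (\<Sum>b\<in>{0..<int r}. card (congruent_pairs r n (root_pairs r j Vt b)))"
    by (simp add: sum_distrib_left)
  also have "\<dots> \<le> real r * real (4 ^ n * (card Vt ^ (2 * n) * D
      + r * ((n + 1) * max 1 (card Vt) ^ n * n ^ (2 * n))))"
    using sum_card_congruent_pairs_le[OF r(1) \<open>\<not> int r dvd j\<close> \<open>finite Vt\<close> \<open>\<forall>v\<in>Vt. 0 < v \<and> v < r\<close>, of n]
    unfolding D_def by (intro mult_left_mono of_nat_mono) simp_all
  also have "\<dots> \<le> real r * (real (4 ^ n * (D + (n + 1) * n ^ (2 * n))) * (V ^ (2 * n) + real r * V ^ n))"
    using count_bound_le[OF V(1) \<open>real (card Vt) \<le> V\<close>] by (rule mult_left_mono) simp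
  finally show ?thesis
    by (simp add: D_def mult_ac)
qed

theorem proposition3:
  fixes n :: nat
  shows "\<exists>C>0. \<forall>(r::nat) (j::int) (V::real) (Vt::nat set) (\<xi>::real).
     prime r \<longrightarrow> coprime j (int r) \<longrightarrow> 1 \<le> V \<longrightarrow> V < real r \<longrightarrow>
     Vt \<subseteq> {v. V / 2 < real v \<and> real v \<le> V} \<longrightarrow>
     (\<Sum>a\<in>{0..<int r}. \<Sum>b\<in>{0..<int r}. cmod (inner_sum r j Vt \<xi> a b) ^ (2 * n))
       \<le> C * (V ^ (2 * n) + real r * V ^ n) * real r"
proof -
  define C where "C = real (4 ^ n * ((\<Sum>m\<le>2*n. root_bound m 0) + (2 * n + 2) + (n + 1) * n ^ (2 * n)))"
  have "C > 0"
    unfolding C_def of_nat_0_less_iff by simp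
  moreover have "\<forall>(r::nat) (j::int) (V::real) (Vt::nat set) (\<xi>::real).
     prime r \<longrightarrow> coprime j (int r) \<longrightarrow> 1 \<le> V \<longrightarrow> V < real r \<longrightarrow>
     Vt \<subseteq> {v. V / 2 < real v \<and> real v \<le> V} \<longrightarrow>
     (\<Sum>a\<in>{0..<int r}. \<Sum>b\<in>{0..<int r}. cmod (inner_sum r j Vt \<xi> a b) ^ (2 * n))
       \<le> C * (V ^ (2 * n) + real r * V ^ n) * real r"
    unfolding C_def using sum_moment_inner_sum_le by blast
  ultimately show ?thesis
    by blast
qed

end
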